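(* In the setting of the context, for each integer $r\ge r_0$ there are elements $g_0\in F_{xz}$ and $g_1\in F_{yz}$ such that: (1) $s_2^{-1}g_0s_2=g_1$; (2) $r/D\le|g_0|_{R_{xz}}\le r$ and $r/D\le|g_1|_{R_{yz}}\le r$; (3) there is a path $\gamma$ in the Cayley graph $\Gamma(G_1,S_1)$ connecting $g_0$ and $g_1$ of length at most $Df(r)$, each vertex of which is of the form $g_0h$ with $h\in H$; in particular $\gamma$ avoids the open ball of radius $r/D$ about $e$.
   Context: $H$ is a finitely presented group with finite generating set $T$, containing a free subgroup $F$ of rank $p$ with free basis $R=\{d_1,\dots,d_p\}\subset T$. $F_x,F_y,F_z$ are free of rank $p$ with bases $R_x=\{x_i\},R_y=\{y_i\},R_z=\{z_i\}$. $G_1=[H\ast_{\langle d_i=x_iy_i^{-1}\rangle}(F_x\times F_y\times F_z)]\times\langle s_1\rangle$; $a_i=x_iz_i$, $b_i=y_iz_i$, $R_{xz}=\{a_i\}$, $R_{yz}=\{b_i\}$, $F_{xz}=\langle R_{xz}\rangle$, $F_{yz}=\langle R_{yz}\rangle$; $G_2=\langle G_1,s_2\mid s_2^{-1}a_is_2=b_i,\ 1\le i\le p\rangle$; $S_1=T\cup R_x\cup R_y\cup R_z\cup R_{xz}\cup R_{yz}\cup\{s_1\}$. $f=\Delta^{-1}$ where $\Delta$ is a non-decreasing bijection of $[0,\infty)$ Lipschitz equivalent to $\mathrm{Dist}_F^H$ (with $\mathrm{Dist}_F^H(n)=\max\{|g|_R:g\in F,|g|_T\le n\}$), $\Delta(r)\ge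 r$ for $r\ge1$, $f(|g|_R)\le|g|_T$ for $g\in F$; and $D>1$, $r_0\ge1$ are constants such that for each $r\ge r_0$ there is an element $u\in F$ which is palindromic with respect to $R$ (its reduced word in $R$ reads the same in both directions) with $r/D\le|u|_R\le r$ and $|u|_T\le Df(r)$. (Such $\Delta,D,r_0$ exist when $\mathrm{Dist}_F^H$ admits an exponentially bounded sequence of palindromic certificates in $F$, the standing assumption.) *)

theory Defs
  imports Complex_Main "HOL-Algebra.Algebra"
begin

text \<open>A letter is a pair (x, b): b = True means x, b = False means x inverse.\<close>

definition words :: "'g set \<Rightarrow> ('g \<times> bool) list set" where
  "words Gn = {w. set (map fst w) \<subseteq> Gn}"

inductive_set peq :: "'g set \<Rightarrow> ('g \<times> bool) list set \<Rightarrow> (('g \<times> bool) list \<times> ('g \<times> bool) list) set"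
  for Gn Rel where
  refl: "w \<in> words Gn \<Longrightarrow> (w, w) \<in> peq Gn Rel"
| sym: "(u, v) \<in> peq Gn Rel \<Longrightarrow> (v, u) \<in> peq Gn Rel"
| trans: "(u, v) \<in> peq Gn Rel \<Longrightarrow> (v, w) \<in> peq Gn Rel \<Longrightarrow> (u, w) \<in> peq Gn Rel"
| cancel: "u \<in> words Gn \<Longrightarrow> v \<in> words Gn \<Longrightarrow> x \<in> Gn \<Longrightarrow>
     (u @ [(x, b), (x, \<not> b)] @ v, u @ v) \<in> peq Gn Rel"
| rel: "u \<in> words Gn \<Longrightarrow> v \<in> words Gn \<Longrightarrow> r \<in> Rel \<Longrightarrow> r \<in> words Gn \<Longrightarrow>
     (u @ r @ v, u @ v) \<in> peq Gn Rel"

definition pres :: "'g set \<Rightarrow> ('g \<times> bool) list set \<Rightarrow> ('g \<times> bool) list set monoid" where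
  "pres Gn Rel = \<lparr> carrier = words Gn // peq Gn Rel,
     monoid.mult = (\<lambda>A B. \<Union>a\<in>A. \<Union>b\<in>B. peq Gn Rel `` {a @ b}),
     one = peq Gn Rel `` {[]} \<rparr>"

definition gen_el :: "'g set \<Rightarrow> ('g \<times> bool) list set \<Rightarrow> 'g \<Rightarrow> ('g \<times> bool) list set" where
  "gen_el Gn Rel x = peq Gn Rel `` {[(x, True)]}"

definition finitely_presented :: "('a, 'b) monoid_scheme \<Rightarrow> bool" where
  "finitely_presented G \<longleftrightarrow> group G \<and>
     (\<exists>(n::nat) Rel. finite Rel \<and> Rel \<subseteq> words {..<n} \<and> pres {..<n} Rel \<cong> G)"

definition word_length :: "('a, 'b) monoid_scheme \<Rightarrow> 'a set \<Rightarrow> 'a \<Rightarrow> nat" where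
  "word_length G S g = (LEAST n. \<exists>l. length l = n \<and> set l \<subseteq> S \<union> m_inv G ` S \<and>
       foldr (\<otimes>\<^bsub>G\<^esub>) l \<one>\<^bsub>G\<^esub> = g)"

definition eval_word :: "('a, 'b) monoid_scheme \<Rightarrow> ('a \<times> bool) list \<Rightarrow> 'a" where
  "eval_word G w = foldr (\<lambda>(x, b) acc. (if b then x else inv\<^bsub>G\<^esub> x) \<otimes>\<^bsub>G\<^esub> acc) w \<one>\<^bsub>G\<^esub>"

definition reduced :: "('a \<times> bool) list \<Rightarrow> bool" where
  "reduced w \<longleftrightarrow> (\<forall>i. Suc i < length w \<longrightarrow>
      \<not> (fst (w ! i) = fst (w ! Suc i) \<and> snd (w ! i) \<noteq> snd (w ! Suc i)))"

definition free_basis :: "('a, 'b) monoid_scheme \<Rightarrow> 'a set \<Rightarrow> bool" where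
  "free_basis G B \<longleftrightarrow> B \<subseteq> carrier G \<and>
     (\<forall>w. w \<noteq> [] \<and> reduced w \<and> set (map fst w) \<subseteq> B \<longrightarrow> eval_word G w \<noteq> \<one>\<^bsub>G\<^esub>)"

definition palindromic :: "('a, 'b) monoid_scheme \<Rightarrow> 'a set \<Rightarrow> 'a \<Rightarrow> bool" where
  "palindromic G R u \<longleftrightarrow> (\<exists>w. reduced w \<and> set (map fst w) \<subseteq> R \<and> eval_word G w = u \<and> rev w = w)"

definition dist_fn :: "('a, 'b) monoid_scheme \<Rightarrow> 'a set \<Rightarrow> 'a set \<Rightarrow> nat \<Rightarrow> nat" where
  "dist_fn G R T n = Max {word_length G R g | g. g \<in> generate G R \<and> word_length G T g \<le> n}"

definition lip_equiv :: "(real \<Rightarrow> real) \<Rightarrow> (nat \<Rightarrow> nat) \<Rightarrow> bool" where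
  "lip_equiv \<Delta> \<phi> \<longleftrightarrow> (\<exists>C\<ge>1. \<forall>n::nat.
      \<Delta> (real n / C) / C \<le> real (\<phi> n) \<and> real (\<phi> n) \<le> C * \<Delta> (C * real n))"

text \<open>vs is a path in the Cayley graph of G w.r.t. S from g to h, of length (length vs - 1).\<close>
definition cayley_path :: "('a, 'b) monoid_scheme \<Rightarrow> 'a set \<Rightarrow> 'a list \<Rightarrow> 'a \<Rightarrow> 'a \<Rightarrow> bool" where
  "cayley_path G S vs g h \<longleftrightarrow> vs \<noteq> [] \<and> hd vs = g \<and> last vs = h \<and> set vs \<subseteq> carrier G \<and>
     (\<forall>k. Suc k < length vs \<longrightarrow>
        (\<exists>s\<in>S. vs ! Suc k = vs ! k \<otimes>\<^bsub>G\<^esub> s \<or> vs ! k = vs ! Suc k \<otimes>\<^bsub>G\<^esub> s))"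

datatype 'h gen = GH 'h | GX nat | GY nat | GZ nat | GS1 | GS2

abbreviation pos :: "'g \<Rightarrow> 'g \<times> bool" where "pos x \<equiv> (x, True)"
abbreviation neg :: "'g \<Rightarrow> 'g \<times> bool" where "neg x \<equiv> (x, False)"

definition comm_rel :: "'g \<Rightarrow> 'g \<Rightarrow> ('g \<times> bool) list" where
  "comm_rel u v = [neg u, neg v, pos u, pos v]"

definition gens1 :: "('h, 'b) monoid_scheme \<Rightarrow> nat \<Rightarrow> 'h gen set" where
  "gens1 H p = GH ` carrier H \<union> GX ` {1..p} \<union> GY ` {1..p} \<union> GZ ` {1..p} \<union> {GS1}"

definition gens2 :: "('h, 'b) monoid_scheme \<Rightarrow> nat \<Rightarrow> 'h gen set" where
  "gens2 H p = gens1 H p \<union> {GS2}"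

text \<open>Relators of G1 = [H *_{d_i = x_i y_i^-1} (F_x \<times> F_y \<times> F_z)] \<times> <s1>:
  multiplication table of H, commutation of the factors F_x, F_y, F_z,
  amalgamation d_i = x_i y_i^-1, and centrality of s1.\<close>
definition rels1 :: "('h, 'b) monoid_scheme \<Rightarrow> nat \<Rightarrow> (nat \<Rightarrow> 'h) \<Rightarrow> ('h gen \<times> bool) list set" where
  "rels1 H p d =
     {[pos (GH a), pos (GH b), neg (GH (a \<otimes>\<^bsub>H\<^esub> b))] | a b. a \<in> carrier H \<and> b \<in> carrier H}
   \<union> {comm_rel (GX i) (GY j) | i j. i \<in> {1..p} \<and> j \<in> {1..p}}
   \<union> {comm_rel (GX i) (GZ j) | i j. i \<in> {1..p} \<and> j \<in> {1..p}}
   \<union> {comm_rel (GY i) (GZ j) | i j. i \<in> {1..p} \<and> j \<in> {1..p}}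
   \<union> {[pos (GH (d i)), pos (GY i), neg (GX i)] | i. i \<in> {1..p}}
   \<union> {comm_rel GS1 v | v. v \<in> gens1 H p - {GS1}}"

text \<open>Relators of G2: those of G1 plus s2^-1 a_i s2 = b_i, i.e. s2^-1 x_i z_i s2 z_i^-1 y_i^-1.\<close>
definition rels2 :: "('h, 'b) monoid_scheme \<Rightarrow> nat \<Rightarrow> (nat \<Rightarrow> 'h) \<Rightarrow> ('h gen \<times> bool) list set" where
  "rels2 H p d = rels1 H p d \<union>
     {[neg GS2, pos (GX i), pos (GZ i), pos GS2, neg (GZ i), neg (GY i)] | i. i \<in> {1..p}}"

definition G1 :: "('h, 'b) monoid_scheme \<Rightarrow> nat \<Rightarrow> (nat \<Rightarrow> 'h) \<Rightarrow> ('h gen \<times> bool) list set monoid" where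
  "G1 H p d = pres (gens1 H p) (rels1 H p d)"

definition G2 :: "('h, 'b) monoid_scheme \<Rightarrow> nat \<Rightarrow> (nat \<Rightarrow> 'h) \<Rightarrow> ('h gen \<times> bool) list set monoid" where
  "G2 H p d = pres (gens2 H p) (rels2 H p d)"

definition el1 :: "('h, 'b) monoid_scheme \<Rightarrow> nat \<Rightarrow> (nat \<Rightarrow> 'h) \<Rightarrow> 'h gen \<Rightarrow> ('h gen \<times> bool) list set" where
  "el1 H p d x = gen_el (gens1 H p) (rels1 H p d) x"

definition a_el :: "('h, 'b) monoid_scheme \<Rightarrow> nat \<Rightarrow> (nat \<Rightarrow> 'h) \<Rightarrow> nat \<Rightarrow> ('h gen \<times> bool) list set" where
  "a_el H p d i = el1 H p d (GX i) \<otimes>\<^bsub>G1 H p d\<^esub> el1 H p d (GZ i)"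

definition b_el :: "('h, 'b) monoid_scheme \<Rightarrow> nat \<Rightarrow> (nat \<Rightarrow> 'h) \<Rightarrow> nat \<Rightarrow> ('h gen \<times> bool) list set" where
  "b_el H p d i = el1 H p d (GY i) \<otimes>\<^bsub>G1 H p d\<^esub> el1 H p d (GZ i)"

definition S1 :: "('h, 'b) monoid_scheme \<Rightarrow> nat \<Rightarrow> (nat \<Rightarrow> 'h) \<Rightarrow> 'h set \<Rightarrow> ('h gen \<times> bool) list set set" where
  "S1 H p d T = (\<lambda>t. el1 H p d (GH t)) ` T \<union> (\<lambda>i. el1 H p d (GX i)) ` {1..p}
     \<union> (\<lambda>i. el1 H p d (GY i)) ` {1..p} \<union> (\<lambda>i. el1 H p d (GZ i)) ` {1..p}
     \<union> a_el H p d ` {1..p} \<union> b_el H p d ` {1..p} \<union> {el1 H p d GS1}"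

definition to_G2 :: "('h, 'b) monoid_scheme \<Rightarrow> nat \<Rightarrow> (nat \<Rightarrow> 'h) \<Rightarrow> ('h gen \<times> bool) list set \<Rightarrow> ('h gen \<times> bool) list set" where
  "to_G2 H p d A = peq (gens2 H p) (rels2 H p d) `` A"

definition s2_el :: "('h, 'b) monoid_scheme \<Rightarrow> nat \<Rightarrow> (nat \<Rightarrow> 'h) \<Rightarrow> ('h gen \<times> bool) list set" where
  "s2_el H p d = gen_el (gens2 H p) (rels2 H p d) GS2"

end

theory Submission
  imports Defs
begin

text \<open>Write the palindromic certificate \<open>u\<close> as its reduced word \<open>w\<close> in the \<open>d\<^sub>i\<close> and put
  \<open>g\<^sub>0 = w(a)\<close>, \<open>g\<^sub>1 = w(b)\<close>; the relations \<open>s\<^sub>2\<^sup>-\<^sup>1 a\<^sub>i s\<^sub>2 = b\<^sub>i\<close> make \<open>g\<^sub>1\<close> the \<open>s\<^sub>2\<close>-conjugate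
  of \<open>g\<^sub>0\<close>. As the \<open>x\<^sub>i\<close>, \<open>y\<^sub>j\<close>, \<open>z\<^sub>k\<close> commute, \<open>g\<^sub>0 = w(x) w(z)\<close> and \<open>g\<^sub>1 = w(y) w(z)\<close>, while
  \<open>d\<^sub>i = x\<^sub>i y\<^sub>i\<^sup>-\<^sup>1\<close> and \<open>rev w = w\<close> give \<open>u = w(x) w(y)\<^sup>-\<^sup>1\<close>. Hence \<open>g\<^sub>1 = g\<^sub>0 u\<^sup>-\<^sup>1\<close>, and a geodesic
  \<open>T\<close>-word for \<open>u\<^sup>-\<^sup>1\<close> traces a path of length \<open>|u|\<^sub>T\<close> from \<open>g\<^sub>0\<close> to \<open>g\<^sub>1\<close> inside \<open>g\<^sub>0 H\<close>.

  All lower bounds come from the retraction of \<open>G\<^sub>1\<close> onto the free group on the \<open>z\<^sub>i\<close> killing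
  \<open>H\<close>, the \<open>x\<^sub>i\<close>, \<open>y\<^sub>i\<close> and \<open>s\<^sub>1\<close>: it maps every generator in \<open>S\<^sub>1\<close> to a word of length at most one,
  and \<open>g\<^sub>0 h\<close> (\<open>h \<in> H\<close>), \<open>g\<^sub>1\<close> to the reduced word \<open>w(z)\<close> of length \<open>|u|\<^sub>R \<ge> r/D\<close>.\<close>

section \<open>Words and presented groups\<close>

abbreviation word_class :: "'g set \<Rightarrow> ('g \<times> bool) list set \<Rightarrow> ('g \<times> bool) list \<Rightarrow> ('g \<times> bool) list set"
  where "word_class Gn Rel w \<equiv> peq Gn Rel `` {w}"

definition inv_letter :: "'g \<times> bool \<Rightarrow> 'g \<times> bool" where
  "inv_letter c = (fst c, \<not> snd c)"

definition inv_word :: "('g \<times> bool) list \<Rightarrow> ('g \<times> bool) list" where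
  "inv_word w = rev (map inv_letter w)"

lemma inv_letter_inv_letter [simp]: "inv_letter (inv_letter c) = c"
  by (simp add: inv_letter_def)

lemma inv_word_Nil [simp]: "inv_word [] = []"
  and inv_word_Cons [simp]: "inv_word (c # w) = inv_word w @ [inv_letter c]"
  and inv_word_append [simp]: "inv_word (u @ v) = inv_word v @ inv_word u"
  and length_inv_word [simp]: "length (inv_word w) = length w"
  by (simp_all add: inv_word_def)

lemma inv_word_inv_word [simp]: "inv_word (inv_word w) = w"
  by (simp add: inv_word_def rev_map comp_def)

lemma fst_set_inv_word [simp]: "fst ` set (inv_word w) = fst ` set w"
  by (force simp: inv_word_def inv_letter_def image_image)

lemma fst_image_apfst [simp]: "fst ` apfst f ` A = f ` fst ` A"
  by (force simp: image_image)

lemma map_apfst_cong: "(\<And>x. x \<in> fst ` set w \<Longrightarrow> f x = g x) \<Longrightarrow> map (apfst f) w = map (apfst g) w"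
  by (induction w) auto

lemma map_apfst_map_apfst: "map (apfst f) (map (apfst g) w) = map (apfst (\<lambda>x. f (g x))) w"
  by (induction w) auto

lemma words_Nil [simp]: "[] \<in> words Gn"
  and words_Cons [simp]: "c # w \<in> words Gn \<longleftrightarrow> fst c \<in> Gn \<and> w \<in> words Gn"
  and words_append [simp]: "u @ v \<in> words Gn \<longleftrightarrow> u \<in> words Gn \<and> v \<in> words Gn"
  and words_inv_word [simp]: "inv_word w \<in> words Gn \<longleftrightarrow> w \<in> words Gn"
  by (auto simp: words_def inv_word_def inv_letter_def image_image)

lemma words_mono: "Gn \<subseteq> Gn' \<Longrightarrow> w \<in> words Gn \<Longrightarrow> w \<in> words Gn'"
  by (auto simp: words_def)

lemma peq_imp_words: "(u, v) \<in> peq Gn Rel \<Longrightarrow> u \<in> words Gn \<and> v \<in> words Gn"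
  by (induction rule: peq.induct) auto

lemma equiv_peq: "equiv (words Gn) (peq Gn Rel)"
  unfolding equiv_def refl_on_def sym_def trans_def
  by (auto dest: peq_imp_words intro: peq.refl peq.sym peq.trans[rotated])

lemma peq_append_left: "(u, v) \<in> peq Gn Rel \<Longrightarrow> w \<in> words Gn \<Longrightarrow> (w @ u, w @ v) \<in> peq Gn Rel"
proof (induction rule: peq.induct)
  case (cancel u v x b)
  then show ?case using peq.cancel[of "w @ u" Gn v x b Rel] by simp
next
  case (rel u v r)
  then show ?case using peq.rel[of "w @ u" Gn v r Rel] by simp
qed (auto intro: peq.intros)

lemma peq_append_right: "(u, v) \<in> peq Gn Rel \<Longrightarrow> w \<in> words Gn \<Longrightarrow> (u @ w, v @ w) \<in> peq Gn Rel"
proof (induction rule: peq.induct)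
  case (cancel u v x b)
  then show ?case using peq.cancel[of u Gn "v @ w" x b Rel] by simp
next
  case (rel u v r)
  then show ?case using peq.rel[of u Gn "v @ w" r Rel] by simp
qed (auto intro: peq.intros)

lemma peq_append: "(a, a') \<in> peq Gn Rel \<Longrightarrow> (b, b') \<in> peq Gn Rel \<Longrightarrow> (a @ b, a' @ b') \<in> peq Gn Rel"
  by (rule peq.trans[of _ "a' @ b"]) (auto intro: peq_append_left peq_append_right dest: peq_imp_words)

lemma peq_inv_word_append_self: "w \<in> words Gn \<Longrightarrow> (inv_word w @ w, []) \<in> peq Gn Rel"
proof (induction w)
  case (Cons c w)
  obtain x b where c: "c = (x, b)" by (cases c)
  have "(inv_word w @ [(x, \<not> b), (x, \<not> \<not> b)] @ w, inv_word w @ w) \<in> peq Gn Rel"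
    using Cons.prems by (intro peq.cancel) (auto simp: c)
  with Cons show ?case by (auto simp: c inv_letter_def intro: peq.trans)
qed (auto intro: peq.refl)

lemma peq_mono:
  assumes "Gn \<subseteq> Gn'" "Rel \<subseteq> Rel'"
  shows "(u, v) \<in> peq Gn Rel \<Longrightarrow> (u, v) \<in> peq Gn' Rel'"
proof (induction rule: peq.induct)
  case (cancel u v x b)
  then show ?case using assms words_mono by (intro peq.cancel) auto
next
  case (rel u v r)
  then show ?case using assms words_mono by (intro peq.rel) auto
next
  case (refl w)
  then show ?case using assms words_mono by (blast intro: peq.refl)
qed (blast intro: peq.sym peq.trans)+

lemma word_class_eqD: "word_class Gn Rel a = word_class Gn Rel b \<Longrightarrow> b \<in> words Gn \<Longrightarrow> (a, b) \<in> peq Gn Rel"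
  by (rule eq_equiv_class[OF _ equiv_peq])

lemma word_class_eqI: "(a, b) \<in> peq Gn Rel \<Longrightarrow> word_class Gn Rel a = word_class Gn Rel b"
  by (rule equiv_class_eq[OF equiv_peq])

lemma pres_carrier_iff: "A \<in> carrier (pres Gn Rel) \<longleftrightarrow> (\<exists>a\<in>words Gn. A = word_class Gn Rel a)"
  by (auto simp: pres_def quotient_def)

lemma word_class_in_carrier [intro]: "a \<in> words Gn \<Longrightarrow> word_class Gn Rel a \<in> carrier (pres Gn Rel)"
  by (auto simp: pres_carrier_iff)

lemma pres_one: "\<one>\<^bsub>pres Gn Rel\<^esub> = word_class Gn Rel []"
  by (simp add: pres_def)

lemma pres_mult_word_class:
  assumes "a \<in> words Gn" "b \<in> words Gn"
  shows "word_class Gn Rel a \<otimes>\<^bsub>pres Gn Rel\<^esub> word_class Gn Rel b = word_class Gn Rel (a @ b)"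
proof -
  have "word_class Gn Rel (a' @ b') = word_class Gn Rel (a @ b)"
    if "a' \<in> word_class Gn Rel a" "b' \<in> word_class Gn Rel b" for a' b'
    using that by (intro word_class_eqI) (auto intro: peq_append peq.sym)
  moreover have "a \<in> word_class Gn Rel a" "b \<in> word_class Gn Rel b"
    using assms by (auto intro: peq.refl)
  ultimately have "(\<Union>a'\<in>word_class Gn Rel a. \<Union>b'\<in>word_class Gn Rel b. word_class Gn Rel (a' @ b'))
      = word_class Gn Rel (a @ b)"
    by blast
  then show ?thesis
    unfolding pres_def by simp
qed

lemma group_pres: "group (pres Gn Rel)"
proof (rule groupI)
  fix x assume "x \<in> carrier (pres Gn Rel)"
  then obtain a where a: "a \<in> words Gn" "x = word_class Gn Rel a" by (auto simp: pres_carrier_iff)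
  then have "word_class Gn Rel (inv_word a) \<otimes>\<^bsub>pres Gn Rel\<^esub> x = \<one>\<^bsub>pres Gn Rel\<^esub>"
    using word_class_eqI[OF peq_inv_word_append_self[OF a(1)]] by (simp add: pres_mult_word_class pres_one)
  then show "\<exists>y\<in>carrier (pres Gn Rel). y \<otimes>\<^bsub>pres Gn Rel\<^esub> x = \<one>\<^bsub>pres Gn Rel\<^esub>"
    using a(1) by (intro bexI[of _ "word_class Gn Rel (inv_word a)"]) auto
next
  fix x y assume "x \<in> carrier (pres Gn Rel)" "y \<in> carrier (pres Gn Rel)"
  then show "x \<otimes>\<^bsub>pres Gn Rel\<^esub> y \<in> carrier (pres Gn Rel)"
    by (auto simp: pres_carrier_iff pres_mult_word_class)
next
  fix x y z assume "x \<in> carrier (pres Gn Rel)" "y \<in> carrier (pres Gn Rel)" "z \<in> carrier (pres Gn Rel)"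
  then show "x \<otimes>\<^bsub>pres Gn Rel\<^esub> y \<otimes>\<^bsub>pres Gn Rel\<^esub> z = x \<otimes>\<^bsub>pres Gn Rel\<^esub> (y \<otimes>\<^bsub>pres Gn Rel\<^esub> z)"
    by (auto simp: pres_carrier_iff pres_mult_word_class)
qed (auto simp: pres_carrier_iff pres_mult_word_class pres_one)

lemma pres_inv_word_class:
  assumes "a \<in> words Gn"
  shows "inv\<^bsub>pres Gn Rel\<^esub> (word_class Gn Rel a) = word_class Gn Rel (inv_word a)"
proof (rule group.inv_equality[OF group_pres])
  show "word_class Gn Rel (inv_word a) \<otimes>\<^bsub>pres Gn Rel\<^esub> word_class Gn Rel a = \<one>\<^bsub>pres Gn Rel\<^esub>"
    using assms word_class_eqI[OF peq_inv_word_append_self[OF assms]] by (simp add: pres_mult_word_class pres_one)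
qed (use assms in auto)

lemma gen_el_in_carrier [intro]: "x \<in> Gn \<Longrightarrow> gen_el Gn Rel x \<in> carrier (pres Gn Rel)"
  by (auto simp: gen_el_def)

lemma eval_word_pres_gen_el:
  assumes "w \<in> words Gn"
  shows "eval_word (pres Gn Rel) (map (apfst (gen_el Gn Rel)) w) = word_class Gn Rel w"
  using assms
proof (induction w)
  case (Cons c w)
  obtain x b where c: "c = (x, b)" by (cases c)
  have "(if b then gen_el Gn Rel x else inv\<^bsub>pres Gn Rel\<^esub> gen_el Gn Rel x) = word_class Gn Rel [(x, b)]"
    using Cons.prems by (auto simp: c gen_el_def pres_inv_word_class inv_letter_def)
  with Cons show ?case
    using pres_mult_word_class[of "[(x, b)]" Gn w Rel] by (simp add: eval_word_def c)
qed (simp add: eval_word_def pres_one)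

lemma eval_relator_pres:
  assumes "r \<in> Rel" "r \<in> words Gn"
  shows "eval_word (pres Gn Rel) (map (apfst (gen_el Gn Rel)) r) = \<one>\<^bsub>pres Gn Rel\<^esub>"
proof -
  have "(r, []) \<in> peq Gn Rel" using peq.rel[of "[]" Gn "[]" r Rel] assms by simp
  then show ?thesis using assms by (simp add: eval_word_pres_gen_el pres_one word_class_eqI)
qed

lemma peq_image_word_class:
  assumes "Gn \<subseteq> Gn'" "Rel \<subseteq> Rel'" "w \<in> words Gn"
  shows "peq Gn' Rel' `` word_class Gn Rel w = word_class Gn' Rel' w"
  using assms peq_mono[OF assms(1,2)] by (blast intro: peq.trans peq.refl)

lemma peq_image_hom:
  assumes "Gn \<subseteq> Gn'" "Rel \<subseteq> Rel'"
  shows "(\<lambda>A. peq Gn' Rel' `` A) \<in> hom (pres Gn Rel) (pres Gn' Rel')"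
proof (rule homI)
  fix A assume "A \<in> carrier (pres Gn Rel)"
  then obtain a where "a \<in> words Gn" "A = word_class Gn Rel a" by (auto simp: pres_carrier_iff)
  then show "peq Gn' Rel' `` A \<in> carrier (pres Gn' Rel')"
    using assms words_mono[OF assms(1)] by (auto simp: peq_image_word_class)
next
  fix A B assume "A \<in> carrier (pres Gn Rel)" "B \<in> carrier (pres Gn Rel)"
  then obtain a b where "a \<in> words Gn" "A = word_class Gn Rel a" "b \<in> words Gn" "B = word_class Gn Rel b"
    by (auto simp: pres_carrier_iff)
  then show "peq Gn' Rel' `` (A \<otimes>\<^bsub>pres Gn Rel\<^esub> B) = peq Gn' Rel' `` A \<otimes>\<^bsub>pres Gn' Rel'\<^esub> peq Gn' Rel' `` B"
    using words_mono[OF assms(1)] by (simp add: pres_mult_word_class peq_image_word_class[OF assms])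
qed

section \<open>Free reduction\<close>

lemma reduced_Cons: "reduced (a # w) \<longleftrightarrow> reduced w \<and> (w = [] \<or> hd w \<noteq> inv_letter a)"
proof -
  have "hd w \<noteq> inv_letter a \<longleftrightarrow> \<not> (fst ((a # w) ! 0) = fst ((a # w) ! 1) \<and> snd ((a # w) ! 0) \<noteq> snd ((a # w) ! 1))"
    if "w \<noteq> []"
    using that by (cases w) (auto simp: inv_letter_def prod_eq_iff)
  moreover have "reduced w \<longleftrightarrow> (\<forall>i. Suc (Suc i) < length (a # w) \<longrightarrow>
      \<not> (fst ((a # w) ! Suc i) = fst ((a # w) ! Suc (Suc i)) \<and> snd ((a # w) ! Suc i) \<noteq> snd ((a # w) ! Suc (Suc i))))"
    by (simp add: reduced_def)
  ultimately show ?thesis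
    unfolding reduced_def[of "a # w"] by (cases w) (auto simp: less_Suc_eq_0_disj all_conj_distrib)
qed

lemma reduced_Nil [simp]: "reduced []"
  by (simp add: reduced_def)

lemma reduced_append:
  "reduced (u @ v) \<longleftrightarrow> reduced u \<and> reduced v \<and> (u = [] \<or> v = [] \<or> hd v \<noteq> inv_letter (last u))"
  by (induction u) (auto simp: reduced_Cons)

lemma reduced_inv_word [simp]: "reduced (inv_word w) \<longleftrightarrow> reduced w"
proof (induction w)
  case (Cons a w)
  then show ?case
    by (cases w) (auto simp: reduced_append reduced_Cons inv_word_def hd_rev last_rev inv_letter_def)
qed (simp add: inv_word_def)

lemma reduced_map_apfst: "reduced (map (apfst f) w) \<Longrightarrow> reduced w"
  by (induction w) (auto simp: reduced_Cons inv_letter_def hd_map)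

fun push_letter :: "'g \<times> bool \<Rightarrow> ('g \<times> bool) list \<Rightarrow> ('g \<times> bool) list" where
  "push_letter c [] = [c]"
| "push_letter c (d # t) = (if d = inv_letter c then t else c # d # t)"

definition reduce_word :: "('g \<times> bool) list \<Rightarrow> ('g \<times> bool) list" where
  "reduce_word w = foldr push_letter w []"

lemma reduce_word_append: "reduce_word (u @ v) = foldr push_letter u (reduce_word v)"
  by (simp add: reduce_word_def)

lemma reduced_push_letter: "reduced t \<Longrightarrow> reduced (push_letter c t)"
  by (cases t) (auto simp: reduced_Cons)

lemma reduced_foldr_push_letter: "reduced t \<Longrightarrow> reduced (foldr push_letter w t)"
  by (induction w) (auto intro: reduced_push_letter)

lemma reduced_reduce_word: "reduced (reduce_word w)"
  by (simp add: reduce_word_def reduced_foldr_push_letter)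

lemma reduce_word_reduced: "reduced w \<Longrightarrow> reduce_word w = w"
proof (induction w)
  case (Cons c w)
  then show ?case by (cases w) (auto simp: reduce_word_def reduced_Cons)
qed (simp add: reduce_word_def)

lemma push_letter_cancel: "reduced t \<Longrightarrow> push_letter c (push_letter (inv_letter c) t) = t"
proof (cases t)
  case (Cons e t')
  assume "reduced t"
  with Cons show ?thesis
    by (cases "e = c"; cases t') (auto simp: reduced_Cons)
qed simp

lemma foldr_push_letter_push_letter:
  assumes "reduced s" "reduced t"
  shows "foldr push_letter (push_letter c s) t = push_letter c (foldr push_letter s t)"
proof (cases s)
  case (Cons e s')
  show ?thesis
  proof (cases "e = inv_letter c")
    case True
    with Cons show ?thesis
      using push_letter_cancel[of "foldr push_letter s' t" c] reduced_foldr_push_letter[OF assms(2)]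
      by simp
  qed (use Cons in simp)
qed simp

lemma foldr_push_letter_reduce_word:
  "reduced t \<Longrightarrow> foldr push_letter w t = foldr push_letter (reduce_word w) t"
  by (induction w) (simp_all add: reduce_word_def foldr_push_letter_push_letter reduced_foldr_push_letter)

lemma foldr_push_letter_cancel: "reduced t \<Longrightarrow> foldr push_letter (w @ inv_word w) t = t"
proof (induction w arbitrary: t)
  case (Cons c w)
  have "foldr push_letter ((c # w) @ inv_word (c # w)) t
      = push_letter c (foldr push_letter (w @ inv_word w) (push_letter (inv_letter c) t))"
    by simp
  also have "\<dots> = push_letter c (push_letter (inv_letter c) t)"
    using Cons by (simp add: reduced_push_letter)
  also have "\<dots> = t"
    using Cons.prems by (rule push_letter_cancel)
  finally show ?case .
qed simp

lemma length_push_letter: "length (push_letter c t) \<le> Suc (length t)"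
  by (cases t) auto

lemma length_foldr_push_letter: "length (foldr push_letter w t) \<le> length w + length t"
  by (induction w) (auto intro: order.trans[OF length_push_letter])

lemma length_reduce_word: "length (reduce_word w) \<le> length w"
  using length_foldr_push_letter[of w "[]"] by (simp add: reduce_word_def)

lemma length_reduce_word_append:
  "length (reduce_word (u @ v)) \<le> length (reduce_word u) + length (reduce_word v)"
  using foldr_push_letter_reduce_word[OF reduced_reduce_word, of u v]
    length_foldr_push_letter[of "reduce_word u" "reduce_word v"]
  by (simp add: reduce_word_append)

section \<open>Evaluating words in a group\<close>

lemma eval_word_Nil [simp]: "eval_word G [] = \<one>\<^bsub>G\<^esub>"
  and eval_word_Cons [simp]:
    "eval_word G ((x, b) # w) = (if b then x else inv\<^bsub>G\<^esub> x) \<otimes>\<^bsub>G\<^esub> eval_word G w"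
  by (simp_all add: eval_word_def)

lemma eval_word_foldr:
  "eval_word G w = foldr (\<otimes>\<^bsub>G\<^esub>) (map (\<lambda>(x, b). if b then x else inv\<^bsub>G\<^esub> x) w) \<one>\<^bsub>G\<^esub>"
  by (induction w) auto

lemma (in monoid) foldr_mult_closed: "set l \<subseteq> carrier G \<Longrightarrow> foldr (\<otimes>) l \<one> \<in> carrier G"
  by (induction l) auto

lemma (in monoid) foldr_mult_append:
  "set xs \<subseteq> carrier G \<Longrightarrow> set ys \<subseteq> carrier G \<Longrightarrow>
   foldr (\<otimes>) (xs @ ys) \<one> = foldr (\<otimes>) xs \<one> \<otimes> foldr (\<otimes>) ys \<one>"
  by (induction xs) (auto simp: m_assoc foldr_mult_closed)

context group
begin

lemma eval_word_closed: "fst ` set w \<subseteq> carrier G \<Longrightarrow> eval_word G w \<in> carrier G"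
  by (induction w) auto

lemma eval_word_append:
  "fst ` set u \<subseteq> carrier G \<Longrightarrow> fst ` set v \<subseteq> carrier G \<Longrightarrow>
   eval_word G (u @ v) = eval_word G u \<otimes> eval_word G v"
  by (induction u) (auto simp: m_assoc eval_word_closed)

lemma eval_word_inv_word: "fst ` set w \<subseteq> carrier G \<Longrightarrow> eval_word G (inv_word w) = inv (eval_word G w)"
proof (induction w)
  case (Cons c w)
  obtain x b where c: "c = (x, b)" by (cases c)
  have "eval_word G (inv_word (c # w)) = eval_word G (inv_word w) \<otimes> eval_word G [inv_letter c]"
    using Cons.prems by (simp del: eval_word_Cons add: eval_word_append inv_letter_def c)
  with Cons show ?case
    by (auto simp: c inv_letter_def inv_mult_group eval_word_closed)
qed simp

lemma eval_word_map_closed: "\<forall>i\<in>fst ` set v. f i \<in> carrier G \<Longrightarrow> eval_word G (map (apfst f) v) \<in> carrier G"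
  by (rule eval_word_closed) auto

lemma eval_word_in_generate: "fst ` set w \<subseteq> A \<Longrightarrow> eval_word G w \<in> generate G A"
proof (induction w)
  case (Cons c w)
  obtain x b where c: "c = (x, b)" by (cases c)
  with Cons have "(if b then x else inv x) \<in> generate G A" "eval_word G w \<in> generate G A"
    by (auto intro: generate.incl generate.inv)
  then show ?case by (simp add: c generate.eng)
qed (simp add: generate.one)

lemma eval_word_map_in_generate:
  "fst ` set v \<subseteq> I \<Longrightarrow> eval_word G (map (apfst f) v) \<in> generate G (f ` I)"
  by (rule eval_word_in_generate) auto

lemma commute_inv: "x \<in> carrier G \<Longrightarrow> y \<in> carrier G \<Longrightarrow> x \<otimes> y = y \<otimes> x \<Longrightarrow> x \<otimes> inv y = inv y \<otimes> x"
  by (metis inv_solve_left inv_solve_right m_assoc m_closed inv_closed)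

lemma commute_mult:
  "x \<in> carrier G \<Longrightarrow> y \<in> carrier G \<Longrightarrow> z \<in> carrier G \<Longrightarrow>
   x \<otimes> y = y \<otimes> x \<Longrightarrow> x \<otimes> z = z \<otimes> x \<Longrightarrow> x \<otimes> (y \<otimes> z) = (y \<otimes> z) \<otimes> x"
  by (metis m_assoc)

lemma commute_if_commutator_eq_one:
  assumes "u \<in> carrier G" "v \<in> carrier G" "inv u \<otimes> (inv v \<otimes> (u \<otimes> v)) = \<one>"
  shows "u \<otimes> v = v \<otimes> u"
proof -
  have "inv (v \<otimes> u) \<otimes> (u \<otimes> v) = \<one>"
    using assms by (simp add: inv_mult_group m_assoc)
  with assms show ?thesis
    by (simp add: inv_solve_left')
qed

lemma commuting_mult_inv_mult_inv:
  assumes "x \<in> carrier G" "y \<in> carrier G" "z \<in> carrier G"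
    and "x \<otimes> y = y \<otimes> x" "x \<otimes> z = z \<otimes> x" "y \<otimes> z = z \<otimes> y"
  shows "(x \<otimes> z) \<otimes> inv (x \<otimes> inv y) = y \<otimes> z"
proof -
  have "(x \<otimes> z) \<otimes> inv (x \<otimes> inv y) = x \<otimes> (z \<otimes> y) \<otimes> inv x"
    using assms(1-3) by (simp add: inv_mult_group m_assoc)
  also have "\<dots> = (y \<otimes> z) \<otimes> x \<otimes> inv x"
    using assms by (metis m_assoc m_closed)
  also have "\<dots> = y \<otimes> z"
    using assms(1-3) by (simp add: m_assoc)
  finally show ?thesis .
qed

lemma commute_eval_word:
  assumes "x \<in> carrier G" "\<forall>y\<in>fst ` set w. y \<in> carrier G \<and> x \<otimes> y = y \<otimes> x"
  shows "x \<otimes> eval_word G w = eval_word G w \<otimes> x"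
  using assms(2)
proof (induction w)
  case (Cons c w)
  obtain y b where c: "c = (y, b)" by (cases c)
  with Cons.prems have y: "y \<in> carrier G" "x \<otimes> y = y \<otimes> x" and w: "fst ` set w \<subseteq> carrier G"
    by auto
  have "x \<otimes> (a \<otimes> eval_word G w) = (a \<otimes> eval_word G w) \<otimes> x"
    if "a \<in> carrier G" "x \<otimes> a = a \<otimes> x" for a
    using Cons that assms(1) eval_word_closed[OF w] by (intro commute_mult) auto
  with y assms(1) show ?case
    by (simp add: c commute_inv)
qed (use assms(1) in simp)

lemma eval_word_map_commute:
  assumes "\<forall>i\<in>fst ` set v. f i \<in> carrier G \<and> g i \<in> carrier G"
    and "\<And>i j. i \<in> fst ` set v \<Longrightarrow> j \<in> fst ` set v \<Longrightarrow> f i \<otimes> g j = g j \<otimes> f i"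
  shows "eval_word G (map (apfst f) v) \<otimes> eval_word G (map (apfst g) v)
       = eval_word G (map (apfst g) v) \<otimes> eval_word G (map (apfst f) v)"
proof (rule commute_eval_word)
  show "eval_word G (map (apfst f) v) \<in> carrier G"
    using assms(1) by (intro eval_word_map_closed) auto
  have "g j \<otimes> eval_word G (map (apfst f) v) = eval_word G (map (apfst f) v) \<otimes> g j"
    if "j \<in> fst ` set v" for j
    using assms(1) assms(2)[OF _ that] that by (intro commute_eval_word) auto
  with assms(1) show "\<forall>y\<in>fst ` set (map (apfst g) v). y \<in> carrier G \<and>
      eval_word G (map (apfst f) v) \<otimes> y = y \<otimes> eval_word G (map (apfst f) v)"
    by auto
qed

lemma eval_word_map_mult:
  assumes "\<forall>i\<in>fst ` set v. f i \<in> carrier G \<and> g i \<in> carrier G"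
    and "\<And>i j. i \<in> fst ` set v \<Longrightarrow> j \<in> fst ` set v \<Longrightarrow> g i \<otimes> f j = f j \<otimes> g i"
  shows "eval_word G (map (apfst (\<lambda>i. f i \<otimes> g i)) v)
       = eval_word G (map (apfst f) v) \<otimes> eval_word G (map (apfst g) v)"
  using assms
proof (induction v)
  case (Cons c v)
  obtain i b where c: "c = (i, b)" by (cases c)
  let ?F = "eval_word G (map (apfst f) v)" and ?G = "eval_word G (map (apfst g) v)"
  have i: "i \<in> fst ` set (c # v)" by (simp add: c)
  have fi: "f i \<in> carrier G" "g i \<in> carrier G"
    using Cons.prems(1) c by auto
  have fg: "g i \<otimes> f i = f i \<otimes> g i"
    using Cons.prems(2)[OF i i] .
  have FG: "?F \<in> carrier G" "?G \<in> carrier G"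
    using Cons.prems(1) by (auto intro: eval_word_map_closed)
  have gF: "g i \<otimes> ?F = ?F \<otimes> g i"
    using Cons.prems(1) Cons.prems(2)[OF i] fi by (intro commute_eval_word) auto
  have IH: "eval_word G (map (apfst (\<lambda>i. f i \<otimes> g i)) v) = ?F \<otimes> ?G"
    using Cons.prems by (intro Cons.IH) auto
  have swap: "(a \<otimes> b) \<otimes> (?F \<otimes> ?G) = (a \<otimes> ?F) \<otimes> (b \<otimes> ?G)"
    if "a \<in> carrier G" "b \<in> carrier G" "b \<otimes> ?F = ?F \<otimes> b" for a b
    using that FG by (metis m_assoc m_closed)
  show ?case
  proof (cases b)
    case True
    then show ?thesis using IH swap[OF fi gF] by (simp add: c)
  next
    case False
    have "inv (f i \<otimes> g i) = inv (f i) \<otimes> inv (g i)"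
      using fi fg by (metis inv_mult_group)
    moreover have "inv (g i) \<otimes> ?F = ?F \<otimes> inv (g i)"
      using commute_inv[OF FG(1) fi(2) gF[symmetric]] by simp
    ultimately show ?thesis
      using IH swap[of "inv (f i)" "inv (g i)"] fi by (simp add: c False)
  qed
qed simp

lemma eval_word_map_inv:
  assumes "\<forall>i\<in>fst ` set v. f i \<in> carrier G"
  shows "eval_word G (map (apfst (\<lambda>i. inv (f i))) v) = inv (eval_word G (map (apfst f) (rev v)))"
  using assms
proof (induction v)
  case (Cons c v)
  obtain i b where c: "c = (i, b)" by (cases c)
  have "fst ` set (map (apfst f) (rev v)) \<subseteq> carrier G" "fst ` set [(f i, b)] \<subseteq> carrier G"
    using Cons.prems c by auto
  from eval_word_append[OF this]
  have "eval_word G (map (apfst f) (rev (c # v))) = eval_word G (map (apfst f) (rev v)) \<otimes> eval_word G [(f i, b)]"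
    by (simp add: c)
  with Cons show ?case
    by (cases b) (auto simp: c inv_mult_group eval_word_map_closed)
qed simp

lemma eval_word_map_conj:
  assumes s: "s \<in> carrier G"
    and "\<And>i. i \<in> fst ` set v \<Longrightarrow> f i \<in> carrier G"
    and "\<And>i. i \<in> fst ` set v \<Longrightarrow> inv s \<otimes> f i \<otimes> s = g i"
  shows "inv s \<otimes> eval_word G (map (apfst f) v) \<otimes> s = eval_word G (map (apfst g) v)"
  using assms(2,3)
proof (induction v)
  case (Cons c v)
  obtain i b where c: "c = (i, b)" by (cases c)
  let ?F = "eval_word G (map (apfst f) v)"
  have fi: "f i \<in> carrier G" "inv s \<otimes> f i \<otimes> s = g i"
    using Cons.prems by (auto simp: c)
  have F: "?F \<in> carrier G"
    using Cons.prems(1) by (intro eval_word_map_closed) auto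
  have IH: "inv s \<otimes> ?F \<otimes> s = eval_word G (map (apfst g) v)"
    using Cons.prems by (intro Cons.IH) auto
  have split: "inv s \<otimes> (a \<otimes> ?F) \<otimes> s = (inv s \<otimes> a \<otimes> s) \<otimes> (inv s \<otimes> ?F \<otimes> s)" if "a \<in> carrier G" for a
    using s F that by (simp add: m_assoc) (simp add: m_assoc[symmetric])
  have "inv s \<otimes> inv (f i) \<otimes> s = inv (inv s \<otimes> f i \<otimes> s)"
    using s fi(1) by (simp add: inv_mult_group m_assoc)
  with IH fi split[OF fi(1)] split[OF inv_closed[OF fi(1)]] show ?case
    by (cases b) (auto simp: c)
qed (use s in simp)

end

lemma eval_word_hom:
  assumes "group G" "group K" "h \<in> hom G K" "fst ` set w \<subseteq> carrier G"
  shows "h (eval_word G w) = eval_word K (map (apfst h) w)"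
  using assms(4)
proof (induction w)
  case (Cons c w)
  interpret group_hom G K h
    using assms by (simp add: group_hom_def group_hom_axioms_def)
  obtain x b where c: "c = (x, b)" by (cases c)
  with Cons show ?case
    by (auto simp: G.eval_word_closed)
qed (use assms in \<open>simp add: hom_one\<close>)

section \<open>Word length\<close>

lemma word_length_le:
  assumes "set l \<subseteq> S \<union> m_inv G ` S" "foldr (\<otimes>\<^bsub>G\<^esub>) l \<one>\<^bsub>G\<^esub> = g"
  shows "word_length G S g \<le> length l"
  unfolding word_length_def using assms by (intro Least_le) blast

lemma word_length_witness:
  assumes "set l \<subseteq> S \<union> m_inv G ` S" "foldr (\<otimes>\<^bsub>G\<^esub>) l \<one>\<^bsub>G\<^esub> = g"
  obtains l' where "length l' = word_length G S g" "set l' \<subseteq> S \<union> m_inv G ` S"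
    "foldr (\<otimes>\<^bsub>G\<^esub>) l' \<one>\<^bsub>G\<^esub> = g"
proof -
  have "\<exists>n l'. length l' = n \<and> set l' \<subseteq> S \<union> m_inv G ` S \<and> foldr (\<otimes>\<^bsub>G\<^esub>) l' \<one>\<^bsub>G\<^esub> = g"
    using assms by blast
  from LeastI_ex[OF this] show ?thesis
    using that unfolding word_length_def by blast
qed

context group
begin

lemma generate_imp_foldr:
  assumes "A \<subseteq> carrier G" "x \<in> generate G A"
  shows "\<exists>l. set l \<subseteq> A \<union> m_inv G ` A \<and> foldr (\<otimes>) l \<one> = x"
  using assms(2)
proof (induction rule: generate.induct)
  case one
  then show ?case by (intro exI[of _ "[]"]) simp
next
  case (incl h)
  then show ?case using assms(1) by (intro exI[of _ "[h]"]) auto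
next
  case (inv h)
  then show ?case using assms(1) by (intro exI[of _ "[inv h]"]) auto
next
  case (eng h1 h2)
  then obtain l1 l2 where "set l1 \<subseteq> A \<union> m_inv G ` A" "foldr (\<otimes>) l1 \<one> = h1"
    "set l2 \<subseteq> A \<union> m_inv G ` A" "foldr (\<otimes>) l2 \<one> = h2"
    by blast
  moreover have "set l1 \<subseteq> carrier G" "set l2 \<subseteq> carrier G"
    using calculation assms(1) by auto
  ultimately show ?case
    by (intro exI[of _ "l1 @ l2"]) (auto simp: foldr_mult_append simp del: foldr_append)
qed

lemma geodesic_foldr:
  assumes "A \<subseteq> carrier G" "x \<in> generate G A"
  obtains l where "length l = word_length G A x" "set l \<subseteq> A \<union> m_inv G ` A" "foldr (\<otimes>) l \<one> = x"
  using generate_imp_foldr[OF assms] word_length_witness by metis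

lemma word_length_eval_word_le:
  assumes "fst ` set w \<subseteq> A"
  shows "word_length G A (eval_word G w) \<le> length w"
proof -
  have "set (map (\<lambda>(x, b). if b then x else inv x) w) \<subseteq> A \<union> m_inv G ` A"
  proof
    fix y assume "y \<in> set (map (\<lambda>(x, b). if b then x else inv x) w)"
    then obtain x b where "(x, b) \<in> set w" "y = (if b then x else inv x)" by auto
    moreover from assms calculation(1) have "x \<in> A" by force
    ultimately show "y \<in> A \<union> m_inv G ` A" by auto
  qed
  from word_length_le[OF this eval_word_foldr[symmetric]] show ?thesis by simp
qed

lemma foldr_rev_map_inv:
  "set l \<subseteq> carrier G \<Longrightarrow> foldr (\<otimes>) (rev (map (m_inv G) l)) \<one> = inv (foldr (\<otimes>) l \<one>)"
proof (induction l)
  case (Cons a l)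
  then have "foldr (\<otimes>) (rev (map (m_inv G) (a # l))) \<one> = inv (foldr (\<otimes>) l \<one>) \<otimes> inv a"
    using foldr_mult_append[of "rev (map (m_inv G) l)" "[inv a]"] by auto
  with Cons.prems show ?case
    by (simp add: inv_mult_group foldr_mult_closed)
qed simp

lemma word_length_inv_le:
  assumes "A \<subseteq> carrier G" "x \<in> generate G A"
  shows "word_length G A (inv x) \<le> word_length G A x"
proof -
  obtain l where l: "length l = word_length G A x" "set l \<subseteq> A \<union> m_inv G ` A" "foldr (\<otimes>) l \<one> = x"
    using geodesic_foldr[OF assms] .
  have "inv y \<in> A \<union> m_inv G ` A" if "y \<in> set l" for y
  proof -
    from l(2) that consider "y \<in> A" | a where "a \<in> A" "y = inv a" by blast
    then show ?thesis
    proof cases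
      case (2 a)
      with assms(1) have "a \<in> carrier G" by blast
      with 2 show ?thesis by simp
    qed simp
  qed
  then have "set (rev (map (m_inv G) l)) \<subseteq> A \<union> m_inv G ` A"
    by auto
  moreover have "set l \<subseteq> carrier G"
    using l(2) assms(1) by blast
  then have "foldr (\<otimes>) (rev (map (m_inv G) l)) \<one> = inv x"
    using l(3) by (simp add: foldr_rev_map_inv)
  ultimately have "word_length G A (inv x) \<le> length (rev (map (m_inv G) l))"
    by (rule word_length_le)
  with l(1) show ?thesis
    by simp
qed

section \<open>Free bases\<close>

lemma free_basis_eval_word_eq_one:
  "free_basis G R \<Longrightarrow> reduced w \<Longrightarrow> fst ` set w \<subseteq> R \<Longrightarrow> eval_word G w = \<one> \<Longrightarrow> w = []"
  unfolding free_basis_def by auto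

lemma reduced_inv_word_append:
  assumes "reduced (c' # w')" "reduced (c # w)" "c' \<noteq> c"
  shows "reduced (inv_word (c' # w') @ c # w)"
proof -
  have "reduced (inv_word (c' # w'))" "last (inv_word (c' # w')) = inv_letter c'"
    using assms(1) reduced_inv_word[of "c' # w'"] by (simp_all del: reduced_inv_word)
  with assms(2,3) show ?thesis
    by (subst reduced_append) simp
qed

lemma free_basis_reduced_word_unique:
  assumes fb: "free_basis G R"
  shows "reduced w1 \<Longrightarrow> reduced w2 \<Longrightarrow> fst ` set w1 \<subseteq> R \<Longrightarrow> fst ` set w2 \<subseteq> R \<Longrightarrow>
    eval_word G w1 = eval_word G w2 \<Longrightarrow> w1 = w2"
proof (induction w1 arbitrary: w2)
  case Nil
  with free_basis_eval_word_eq_one[OF fb Nil.prems(2,4)] show ?case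
    by simp
next
  case (Cons c w1)
  have R: "R \<subseteq> carrier G" using fb by (simp add: free_basis_def)
  from free_basis_eval_word_eq_one[OF fb Cons.prems(1,3)] Cons.prems(5)
  obtain c2 w2' where w2: "w2 = c2 # w2'" by (cases w2) auto
  show ?case
  proof (cases "c2 = c")
    case True
    obtain x b where c: "c = (x, b)" by (cases c)
    have "x \<in> carrier G" "eval_word G w1 \<in> carrier G" "eval_word G w2' \<in> carrier G"
      using Cons.prems(3,4) R w2 c by (auto intro!: eval_word_closed)
    with Cons.prems(5) w2 True c have "eval_word G w1 = eval_word G w2'"
      by (cases b) auto
    with Cons.IH Cons.prems w2 True show ?thesis
      by (auto simp: reduced_Cons)
  next
    case False
    have "fst ` set w2 \<subseteq> carrier G" "fst ` set (c # w1) \<subseteq> carrier G"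
      using Cons.prems(3,4) R by auto
    with Cons.prems(5) have "eval_word G (inv_word w2 @ c # w1) = \<one>"
      by (simp add: eval_word_append eval_word_inv_word eval_word_closed)
    moreover have "fst ` set (inv_word w2 @ c # w1) \<subseteq> R"
      using Cons.prems(3,4) by (simp add: image_Un)
    ultimately have "inv_word w2 @ c # w1 = []"
      using free_basis_eval_word_eq_one[OF fb reduced_inv_word_append] Cons.prems(1,2) w2 False
      by blast
    then show ?thesis by simp
  qed
qed

definition basis_letter :: "'a set \<Rightarrow> 'a \<Rightarrow> 'a \<times> bool" where
  "basis_letter R c = (if c \<in> R then (c, True) else (inv c, False))"

lemma basis_letter_word:
  assumes "R \<subseteq> carrier G" "set l \<subseteq> R \<union> m_inv G ` R"
  shows "fst ` set (map (basis_letter R) l) \<subseteq> R"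
    and "eval_word G (map (basis_letter R) l) = foldr (\<otimes>) l \<one>"
  using assms(2) by (induction l) (use assms(1) in \<open>auto simp: basis_letter_def\<close>)

lemma geodesic_basis_letter_reduced:
  assumes R: "R \<subseteq> carrier G" and l: "set l \<subseteq> R \<union> m_inv G ` R"
    and geodesic: "length l = word_length G R (foldr (\<otimes>) l \<one>)"
  shows "reduced (map (basis_letter R) l)"
proof (rule ccontr)
  assume "\<not> reduced (map (basis_letter R) l)"
  then obtain i where i: "Suc i < length l"
    and cancel: "fst (basis_letter R (l ! i)) = fst (basis_letter R (l ! Suc i))"
      "snd (basis_letter R (l ! i)) \<noteq> snd (basis_letter R (l ! Suc i))"
    unfolding reduced_def by auto
  have mem: "l ! i \<in> R \<union> m_inv G ` R" "l ! Suc i \<in> R \<union> m_inv G ` R"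
    using i l nth_mem[of i l] nth_mem[of "Suc i" l] by (meson Suc_lessD subsetD)+
  \<comment> \<open>two adjacent letters cancel, so deleting them gives a shorter word for the same element\<close>
  have one: "l ! i \<otimes> l ! Suc i = \<one>"
    using mem cancel R by (auto simp: basis_letter_def split: if_splits)
  define l' where "l' = take i l @ drop (Suc (Suc i)) l"
  have l_split: "l = take i l @ l ! i # l ! Suc i # drop (Suc (Suc i)) l"
    using i by (simp add: Cons_nth_drop_Suc)
  have l'_sub: "set l' \<subseteq> R \<union> m_inv G ` R"
    using l by (auto simp: l'_def dest: in_set_takeD in_set_dropD)
  have "foldr (\<otimes>) (drop (Suc (Suc i)) l) \<one> \<in> carrier G"
    using l R by (intro foldr_mult_closed) (auto dest: in_set_dropD)
  moreover have "l ! i \<in> carrier G" "l ! Suc i \<in> carrier G"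
    using mem R by auto
  ultimately have "l ! i \<otimes> (l ! Suc i \<otimes> foldr (\<otimes>) (drop (Suc (Suc i)) l) \<one>)
      = foldr (\<otimes>) (drop (Suc (Suc i)) l) \<one>"
    using one by (simp add: m_assoc[symmetric])
  then have "foldr (\<otimes>) l \<one> = foldr (\<otimes>) l' \<one>"
    by (subst l_split) (simp add: l'_def)
  then have "word_length G R (foldr (\<otimes>) l \<one>) \<le> length l'"
    using word_length_le[OF l'_sub] by simp
  moreover have "length l' < length l"
    using i by (simp add: l'_def)
  ultimately show False
    using geodesic by simp
qed

lemma palindromic_geodesic_word:
  assumes fb: "free_basis G R" and pal: "palindromic G R u"
  obtains w where "reduced w" "fst ` set w \<subseteq> R" "eval_word G w = u" "rev w = w"
    "length w = word_length G R u"
proof -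
  obtain w where w: "reduced w" "fst ` set w \<subseteq> R" "eval_word G w = u" "rev w = w"
    using pal unfolding palindromic_def by auto
  have R: "R \<subseteq> carrier G" using fb by (simp add: free_basis_def)
  have "u \<in> generate G R"
    using w(2,3) eval_word_in_generate by blast
  then obtain l where l: "length l = word_length G R u" "set l \<subseteq> R \<union> m_inv G ` R" "foldr (\<otimes>) l \<one> = u"
    using geodesic_foldr[OF R] by blast
  have "map (basis_letter R) l = w"
    using free_basis_reduced_word_unique[OF fb geodesic_basis_letter_reduced[OF R l(2)] w(1)]
      basis_letter_word[OF R l(2)] l w by simp
  with l w that show ?thesis by auto
qed

end

lemma palindromic_index_word:
  assumes "group H" "free_basis H (d ` I)" "palindromic H (d ` I) u"
  obtains wi where "fst ` set wi \<subseteq> I" "reduced wi" "rev wi = wi"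
    "eval_word H (map (apfst d) wi) = u" "length wi = word_length H (d ` I) u"
proof -
  obtain w where w: "reduced w" "fst ` set w \<subseteq> d ` I" "eval_word H w = u" "rev w = w"
    "length w = word_length H (d ` I) u"
    using group.palindromic_geodesic_word[OF assms] .
  define wi where "wi = map (apfst (inv_into I d)) w"
  have "map (apfst d) wi = w"
    unfolding wi_def map_apfst_map_apfst
  proof (rule map_idI)
    fix c assume "c \<in> set w"
    with w(2) have "fst c \<in> d ` I" by auto
    then show "apfst (\<lambda>x. d (inv_into I d x)) c = c"
      by (cases c) (simp add: f_inv_into_f)
  qed
  moreover have "fst ` set wi \<subseteq> I"
    using w(2) by (auto simp: wi_def inv_into_into)
  moreover have "rev wi = wi"
    using w(4) by (metis wi_def rev_map)
  moreover have "reduced wi"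
    using reduced_map_apfst[of d wi] \<open>map (apfst d) wi = w\<close> w(1) by simp
  moreover have "length wi = length w"
    by (simp add: wi_def)
  ultimately show ?thesis
    using that[of wi] w(3,5) by simp
qed

section \<open>Paths in Cayley graphs\<close>

lemma (in monoid) foldr_mult_take_Suc:
  assumes "set l \<subseteq> carrier G" "k < length l"
  shows "foldr (\<otimes>) (take (Suc k) l) \<one> = foldr (\<otimes>) (take k l) \<one> \<otimes> l ! k"
proof -
  have "l ! k \<in> carrier G" "set (take k l) \<subseteq> carrier G"
    using assms by (auto dest: in_set_takeD)
  then show ?thesis
    using foldr_mult_append[of "take k l" "[l ! k]"] assms(2)
    by (simp add: take_Suc_conv_app_nth del: foldr_append)
qed

lemma cayley_edge_hom_letter:
  assumes "group H" "group G" "h \<in> hom H G" "T \<subseteq> carrier H" "h ` T \<subseteq> S" "v \<in> carrier G"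
    and "t \<in> T \<union> m_inv H ` T"
  shows "\<exists>s\<in>S. v \<otimes>\<^bsub>G\<^esub> h t = v \<otimes>\<^bsub>G\<^esub> s \<or> v = (v \<otimes>\<^bsub>G\<^esub> h t) \<otimes>\<^bsub>G\<^esub> s"
  using assms(7)
proof
  assume "t \<in> m_inv H ` T"
  then obtain t' where t': "t' \<in> T" "t = inv\<^bsub>H\<^esub> t'" by blast
  interpret G: group G by (rule assms(2))
  interpret hom: group_hom H G h
    using assms(1-3) by (simp add: group_hom_def group_hom_axioms_def)
  have "t' \<in> carrier H"
    using t'(1) assms(4) by blast
  with t'(2) assms(6) have "v = (v \<otimes>\<^bsub>G\<^esub> h t) \<otimes>\<^bsub>G\<^esub> h t'"
    by (simp add: G.m_assoc)
  with t'(1) assms(5) show ?thesis by blast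
qed (use assms(5) in blast)

text \<open>A geodesic \<open>T\<close>-word for \<open>x\<close>, read through \<open>h\<close>, gives a path from \<open>g\<close> to \<open>g h(x)\<close> through
  the prefixes \<open>g h(x\<^sub>1 \<cdots> x\<^sub>k)\<close>.\<close>

lemma cayley_path_hom_word:
  assumes "group H" "group G" "h \<in> hom H G" "T \<subseteq> carrier H" "h ` T \<subseteq> S" "g \<in> carrier G"
    and "x \<in> generate H T"
  obtains \<gamma> where "cayley_path G S \<gamma> g (g \<otimes>\<^bsub>G\<^esub> h x)" "length \<gamma> = Suc (word_length H T x)"
    "\<forall>v\<in>set \<gamma>. \<exists>t\<in>carrier H. v = g \<otimes>\<^bsub>G\<^esub> h t"
proof -
  interpret H: group H by (rule assms(1))
  interpret G: group G by (rule assms(2))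
  interpret hom: group_hom H G h
    using assms(1-3) by (simp add: group_hom_def group_hom_axioms_def)
  obtain ts where ts: "length ts = word_length H T x" "set ts \<subseteq> T \<union> m_inv H ` T"
    "foldr (\<otimes>\<^bsub>H\<^esub>) ts \<one>\<^bsub>H\<^esub> = x"
    using H.geodesic_foldr[OF assms(4,7)] .
  have ts_carrier: "set ts \<subseteq> carrier H" using ts(2) assms(4) by auto
  define prefix where "prefix k = foldr (\<otimes>\<^bsub>H\<^esub>) (take k ts) \<one>\<^bsub>H\<^esub>" for k
  define \<gamma> where "\<gamma> = map (\<lambda>k. g \<otimes>\<^bsub>G\<^esub> h (prefix k)) [0..<Suc (length ts)]"
  have prefix_carrier: "prefix k \<in> carrier H" for k
    unfolding prefix_def using ts_carrier by (intro H.foldr_mult_closed) (auto dest: in_set_takeD)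
  have nth_\<gamma>: "\<gamma> ! k = g \<otimes>\<^bsub>G\<^esub> h (prefix k)" if "k < Suc (length ts)" for k
    using that unfolding \<gamma>_def by (simp del: upt_Suc)
  have step: "\<exists>s\<in>S. \<gamma> ! Suc k = \<gamma> ! k \<otimes>\<^bsub>G\<^esub> s \<or> \<gamma> ! k = \<gamma> ! Suc k \<otimes>\<^bsub>G\<^esub> s"
    if k: "k < length ts" for k
  proof -
    have "ts ! k \<in> T \<union> m_inv H ` T" using ts(2) k nth_mem by blast
    moreover have "ts ! k \<in> carrier H" using ts_carrier k nth_mem by blast
    moreover have "\<gamma> ! Suc k = \<gamma> ! k \<otimes>\<^bsub>G\<^esub> h (ts ! k)"
      using calculation(2) k ts_carrier assms(6) prefix_carrier
      by (simp add: nth_\<gamma> prefix_def H.foldr_mult_take_Suc G.m_assoc hom.hom_mult)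
    ultimately show ?thesis
      using cayley_edge_hom_letter[OF assms(1-5)] k assms(6) prefix_carrier by (simp add: nth_\<gamma>)
  qed
  have length_\<gamma>: "length \<gamma> = Suc (length ts)"
    by (simp add: \<gamma>_def)
  then have "\<gamma> \<noteq> []" by auto
  with length_\<gamma> have "hd \<gamma> = \<gamma> ! 0" "last \<gamma> = \<gamma> ! length ts"
    by (simp_all add: hd_conv_nth last_conv_nth)
  moreover have "prefix 0 = \<one>\<^bsub>H\<^esub>" "prefix (length ts) = x"
    using ts(3) by (simp_all add: prefix_def)
  ultimately have ends: "hd \<gamma> = g" "last \<gamma> = g \<otimes>\<^bsub>G\<^esub> h x"
    using nth_\<gamma>[of 0] nth_\<gamma>[of "length ts"] assms(6) by simp_all
  have vertices: "set \<gamma> = (\<lambda>k. g \<otimes>\<^bsub>G\<^esub> h (prefix k)) ` {0..<Suc (length ts)}"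
    by (simp add: \<gamma>_def del: upt_Suc)
  have "cayley_path G S \<gamma> g (g \<otimes>\<^bsub>G\<^esub> h x)"
    unfolding cayley_path_def
  proof (intro conjI allI impI)
    show "set \<gamma> \<subseteq> carrier G"
      using assms(6) prefix_carrier by (auto simp: vertices)
  qed (use \<open>\<gamma> \<noteq> []\<close> ends step length_\<gamma> in simp_all)
  moreover have "\<forall>v\<in>set \<gamma>. \<exists>t\<in>carrier H. v = g \<otimes>\<^bsub>G\<^esub> h t"
    using prefix_carrier by (auto simp: vertices)
  ultimately show ?thesis
    using that ts(1) length_\<gamma> by simp
qed

section \<open>Substitutions and a lower bound for word length\<close>

definition subst_word :: "('g \<Rightarrow> ('e \<times> bool) list) \<Rightarrow> ('g \<times> bool) list \<Rightarrow> ('e \<times> bool) list" where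
  "subst_word \<sigma> w = concat (map (\<lambda>(x, b). if b then \<sigma> x else inv_word (\<sigma> x)) w)"

lemma subst_word_Nil [simp]: "subst_word \<sigma> [] = []"
  and subst_word_Cons [simp]:
    "subst_word \<sigma> ((x, b) # w) = (if b then \<sigma> x else inv_word (\<sigma> x)) @ subst_word \<sigma> w"
  and subst_word_append [simp]: "subst_word \<sigma> (u @ v) = subst_word \<sigma> u @ subst_word \<sigma> v"
  by (simp_all add: subst_word_def)

lemma subst_word_inv_word: "subst_word \<sigma> (inv_word w) = inv_word (subst_word \<sigma> w)"
  by (induction w) (auto simp: inv_letter_def)

lemma subst_word_subst_word: "subst_word \<sigma> (subst_word \<tau> w) = subst_word (\<lambda>i. subst_word \<sigma> (\<tau> i)) w"
  by (induction w) (auto simp: subst_word_inv_word)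

lemma subst_word_letters: "subst_word (\<lambda>i. [(i, True)]) w = w"
  by (induction w) (auto simp: inv_letter_def)

text \<open>\<open>reduce_word \<circ> subst_word \<sigma>\<close> is the homomorphism into the free group determined by \<open>\<sigma>\<close>;
  it factors through the presented group once \<open>\<sigma>\<close> kills the relators.\<close>

lemma reduce_subst_word_peq:
  assumes rel: "\<forall>r\<in>Rel. reduce_word (subst_word \<sigma> r) = []"
  shows "(u, v) \<in> peq Gn Rel \<Longrightarrow> reduce_word (subst_word \<sigma> u) = reduce_word (subst_word \<sigma> v)"
proof (induction rule: peq.induct)
  case (cancel u v x b)
  have "foldr push_letter (subst_word \<sigma> [(x, b), (x, \<not> b)]) t = t" if "reduced t" for t
    using foldr_push_letter_cancel[OF that, of "\<sigma> x"] foldr_push_letter_cancel[OF that, of "inv_word (\<sigma> x)"]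
    by (cases b) simp_all
  then show ?case
    using reduced_reduce_word[of "subst_word \<sigma> v"]
    by (simp only: subst_word_append reduce_word_append foldr_append)
next
  case (rel u v r)
  have "foldr push_letter (subst_word \<sigma> r) t = t" if "reduced t" for t
    using foldr_push_letter_reduce_word[OF that, of "subst_word \<sigma> r"] rel.hyps(3) assms by simp
  then show ?case
    using reduced_reduce_word[of "subst_word \<sigma> v"]
    by (simp only: subst_word_append reduce_word_append foldr_append)
qed auto

lemma eval_word_pres_subst_word:
  assumes "\<forall>i\<in>fst ` set v. f i = word_class Gn Rel (\<omega> i) \<and> \<omega> i \<in> words Gn"
  shows "eval_word (pres Gn Rel) (map (apfst f) v) = word_class Gn Rel (subst_word \<omega> v) \<and>
    subst_word \<omega> v \<in> words Gn"
  using assms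
proof (induction v)
  case (Cons c v)
  obtain i b where c: "c = (i, b)" by (cases c)
  from Cons have "eval_word (pres Gn Rel) (map (apfst f) v) = word_class Gn Rel (subst_word \<omega> v)"
    "subst_word \<omega> v \<in> words Gn" "f i = word_class Gn Rel (\<omega> i)" "\<omega> i \<in> words Gn"
    by (auto simp: c)
  then show ?case
    by (cases b) (simp_all add: c pres_mult_word_class pres_inv_word_class)
qed (simp add: pres_one)

lemma short_subst_word_inv:
  assumes S: "\<forall>c\<in>S. \<exists>v\<in>words Gn. c = word_class Gn Rel v \<and> length (subst_word \<sigma> v) \<le> 1"
    and c: "c \<in> S \<union> m_inv (pres Gn Rel) ` S"
  shows "\<exists>v\<in>words Gn. c = word_class Gn Rel v \<and> length (subst_word \<sigma> v) \<le> 1"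
  using c
proof
  assume "c \<in> m_inv (pres Gn Rel) ` S"
  then obtain c' where "c' \<in> S" "c = inv\<^bsub>pres Gn Rel\<^esub> c'" by blast
  moreover from S this(1) obtain v where "v \<in> words Gn" "c' = word_class Gn Rel v"
    "length (subst_word \<sigma> v) \<le> 1"
    by blast
  ultimately have "inv_word v \<in> words Gn" "c = word_class Gn Rel (inv_word v)"
    "length (subst_word \<sigma> (inv_word v)) \<le> 1"
    by (simp_all add: pres_inv_word_class subst_word_inv_word)
  then show ?thesis by blast
qed (use S in blast)

lemma length_reduce_subst_word_le:
  assumes rel: "\<forall>r\<in>Rel. reduce_word (subst_word \<sigma> r) = []"
    and S: "\<forall>c\<in>S. \<exists>v\<in>words Gn. c = word_class Gn Rel v \<and> length (subst_word \<sigma> v) \<le> 1"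
  shows "set l \<subseteq> S \<union> m_inv (pres Gn Rel) ` S \<Longrightarrow> w \<in> words Gn \<Longrightarrow>
    foldr (\<otimes>\<^bsub>pres Gn Rel\<^esub>) l \<one>\<^bsub>pres Gn Rel\<^esub> = word_class Gn Rel w \<Longrightarrow>
    length (reduce_word (subst_word \<sigma> w)) \<le> length l"
proof (induction l arbitrary: w)
  case Nil
  then have "(w, []) \<in> peq Gn Rel"
    by (intro word_class_eqD) (simp_all add: pres_one)
  from reduce_subst_word_peq[OF rel this] show ?case
    by (simp add: reduce_word_def)
next
  case (Cons c l)
  have "c \<in> S \<union> m_inv (pres Gn Rel) ` S"
    using Cons.prems(1) by simp
  from short_subst_word_inv[OF S this]
  obtain v where v: "v \<in> words Gn" "c = word_class Gn Rel v" "length (subst_word \<sigma> v) \<le> 1"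
    by blast
  have "S \<subseteq> carrier (pres Gn Rel)"
    using S by auto
  then have "S \<union> m_inv (pres Gn Rel) ` S \<subseteq> carrier (pres Gn Rel)"
    using group.inv_closed[OF group_pres] by blast
  with Cons.prems(1) have "set l \<subseteq> carrier (pres Gn Rel)"
    by (meson set_subset_Cons subset_trans)
  then have "foldr (\<otimes>\<^bsub>pres Gn Rel\<^esub>) l \<one>\<^bsub>pres Gn Rel\<^esub> \<in> carrier (pres Gn Rel)"
    by (rule monoid.foldr_mult_closed[OF group.is_monoid[OF group_pres]])
  then obtain v' where v': "v' \<in> words Gn"
    "foldr (\<otimes>\<^bsub>pres Gn Rel\<^esub>) l \<one>\<^bsub>pres Gn Rel\<^esub> = word_class Gn Rel v'"
    unfolding pres_carrier_iff by blast
  have "word_class Gn Rel (v @ v') = word_class Gn Rel w"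
    using Cons.prems(3) v v' by (simp add: pres_mult_word_class)
  then have "(v @ v', w) \<in> peq Gn Rel"
    using Cons.prems(2) by (rule word_class_eqD)
  from reduce_subst_word_peq[OF rel this]
  have "reduce_word (subst_word \<sigma> w) = reduce_word (subst_word \<sigma> v @ subst_word \<sigma> v')"
    by simp
  then have "length (reduce_word (subst_word \<sigma> w))
      \<le> length (reduce_word (subst_word \<sigma> v)) + length (reduce_word (subst_word \<sigma> v'))"
    using length_reduce_word_append by simp
  moreover have "length (reduce_word (subst_word \<sigma> v')) \<le> length l"
    using Cons.IH Cons.prems(1) v' by simp
  ultimately show ?case
    using v(3) length_reduce_word[of "subst_word \<sigma> v"] by simp
qed

lemma word_length_pres_ge:
  assumes rel: "\<forall>r\<in>Rel. reduce_word (subst_word \<sigma> r) = []"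
    and S: "\<forall>c\<in>S. \<exists>v\<in>words Gn. c = word_class Gn Rel v \<and> length (subst_word \<sigma> v) \<le> 1"
    and w: "w \<in> words Gn" "word_class Gn Rel w \<in> generate (pres Gn Rel) S"
  shows "length (reduce_word (subst_word \<sigma> w)) \<le> word_length (pres Gn Rel) S (word_class Gn Rel w)"
proof -
  have "S \<subseteq> carrier (pres Gn Rel)"
    using S by auto
  then obtain l where "length l = word_length (pres Gn Rel) S (word_class Gn Rel w)"
    "set l \<subseteq> S \<union> m_inv (pres Gn Rel) ` S" "foldr (\<otimes>\<^bsub>pres Gn Rel\<^esub>) l \<one>\<^bsub>pres Gn Rel\<^esub> = word_class Gn Rel w"
    using group.geodesic_foldr[OF group_pres _ w(2)] by blast
  with length_reduce_subst_word_le[OF rel S] w(1) show ?thesis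
    by metis
qed

section \<open>The groups \<open>G\<^sub>1\<close> and \<open>G\<^sub>2\<close>\<close>

lemma gen_in_gens1 [simp]:
  "GH a \<in> gens1 H p \<longleftrightarrow> a \<in> carrier H"
  "GX i \<in> gens1 H p \<longleftrightarrow> i \<in> {1..p}"
  "GY i \<in> gens1 H p \<longleftrightarrow> i \<in> {1..p}"
  "GZ i \<in> gens1 H p \<longleftrightarrow> i \<in> {1..p}"
  "GS1 \<in> gens1 H p"
  "GS2 \<notin> gens1 H p"
  by (auto simp: gens1_def)

lemma gens1_subset_gens2: "gens1 H p \<subseteq> gens2 H p"
  by (auto simp: gens2_def)

lemma rels1_subset_rels2: "rels1 H p d \<subseteq> rels2 H p d"
  by (simp add: rels2_def)

lemma group_G1: "group (G1 H p d)"
  by (simp add: G1_def group_pres)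

lemma group_G2: "group (G2 H p d)"
  by (simp add: G2_def group_pres)

lemma el1_eq_gen_el: "el1 H p d = gen_el (gens1 H p) (rels1 H p d)"
  by (simp add: el1_def fun_eq_iff)

lemma el1_eq_word_class: "el1 H p d x = word_class (gens1 H p) (rels1 H p d) [(x, True)]"
  by (simp add: el1_def gen_el_def)

lemma el1_in_carrier: "x \<in> gens1 H p \<Longrightarrow> el1 H p d x \<in> carrier (G1 H p d)"
  by (simp add: el1_def G1_def gen_el_in_carrier)

lemma eval_relator_G1:
  assumes "r \<in> rels1 H p d" "r \<in> words (gens1 H p)"
  shows "eval_word (G1 H p d) (map (apfst (el1 H p d)) r) = \<one>\<^bsub>G1 H p d\<^esub>"
  using eval_relator_pres[OF assms] by (simp add: G1_def el1_eq_gen_el)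

lemma rels1_memberI:
  "a \<in> carrier H \<Longrightarrow> b \<in> carrier H \<Longrightarrow>
     [(GH a, True), (GH b, True), (GH (a \<otimes>\<^bsub>H\<^esub> b), False)] \<in> rels1 H p d"
  "i \<in> {1..p} \<Longrightarrow> j \<in> {1..p} \<Longrightarrow> comm_rel (GX i) (GY j) \<in> rels1 H p d"
  "i \<in> {1..p} \<Longrightarrow> j \<in> {1..p} \<Longrightarrow> comm_rel (GX i) (GZ j) \<in> rels1 H p d"
  "i \<in> {1..p} \<Longrightarrow> j \<in> {1..p} \<Longrightarrow> comm_rel (GY i) (GZ j) \<in> rels1 H p d"
  "i \<in> {1..p} \<Longrightarrow> [(GH (d i), True), (GY i, True), (GX i, False)] \<in> rels1 H p d"
  unfolding rels1_def by blast+

lemma el1_commute: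
  assumes "comm_rel x y \<in> rels1 H p d" "x \<in> gens1 H p" "y \<in> gens1 H p"
  shows "el1 H p d x \<otimes>\<^bsub>G1 H p d\<^esub> el1 H p d y = el1 H p d y \<otimes>\<^bsub>G1 H p d\<^esub> el1 H p d x"
  using eval_relator_G1[OF assms(1)] assms(2,3)
  by (intro group.commute_if_commutator_eq_one[OF group_G1] el1_in_carrier)
    (simp_all add: comm_rel_def el1_in_carrier group.is_monoid[OF group_G1])

lemma el1_XYZ_commute:
  assumes "i \<in> {1..p}" "j \<in> {1..p}"
  shows "el1 H p d (GX i) \<otimes>\<^bsub>G1 H p d\<^esub> el1 H p d (GY j) = el1 H p d (GY j) \<otimes>\<^bsub>G1 H p d\<^esub> el1 H p d (GX i)"
    and "el1 H p d (GX i) \<otimes>\<^bsub>G1 H p d\<^esub> el1 H p d (GZ j) = el1 H p d (GZ j) \<otimes>\<^bsub>G1 H p d\<^esub> el1 H p d (GX i)"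
    and "el1 H p d (GY i) \<otimes>\<^bsub>G1 H p d\<^esub> el1 H p d (GZ j) = el1 H p d (GZ j) \<otimes>\<^bsub>G1 H p d\<^esub> el1 H p d (GY i)"
  using assms by (intro el1_commute rels1_memberI; simp)+

lemma GH_hom:
  assumes "group H"
  shows "(\<lambda>a. el1 H p d (GH a)) \<in> hom H (G1 H p d)"
proof (rule homI)
  interpret G: group "G1 H p d" by (rule group_G1)
  fix a b assume ab: "a \<in> carrier H" "b \<in> carrier H"
  then have ab': "a \<otimes>\<^bsub>H\<^esub> b \<in> carrier H"
    using assms by (simp add: group.is_monoid monoid.m_closed)
  have "eval_word (G1 H p d) (map (apfst (el1 H p d)) [(GH a, True), (GH b, True), (GH (a \<otimes>\<^bsub>H\<^esub> b), False)])
      = \<one>\<^bsub>G1 H p d\<^esub>"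
    using ab ab' by (intro eval_relator_G1 rels1_memberI) simp_all
  with ab ab' show "el1 H p d (GH (a \<otimes>\<^bsub>H\<^esub> b)) = el1 H p d (GH a) \<otimes>\<^bsub>G1 H p d\<^esub> el1 H p d (GH b)"
    by (simp add: G.inv_solve_right' el1_in_carrier G.m_assoc[symmetric])
qed (simp add: el1_in_carrier)

lemma el1_GH_d:
  assumes "i \<in> {1..p}" "d i \<in> carrier H"
  shows "el1 H p d (GH (d i)) = el1 H p d (GX i) \<otimes>\<^bsub>G1 H p d\<^esub> inv\<^bsub>G1 H p d\<^esub> el1 H p d (GY i)"
proof -
  interpret G: group "G1 H p d" by (rule group_G1)
  have "eval_word (G1 H p d) (map (apfst (el1 H p d)) [(GH (d i), True), (GY i, True), (GX i, False)])
      = \<one>\<^bsub>G1 H p d\<^esub>"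
    using assms by (intro eval_relator_G1 rels1_memberI) simp_all
  with assms show ?thesis
    by (simp add: G.inv_solve_right' G.inv_solve_right el1_in_carrier G.m_assoc[symmetric])
qed

lemma a_el_eq: "a_el H p d = (\<lambda>i. el1 H p d (GX i) \<otimes>\<^bsub>G1 H p d\<^esub> el1 H p d (GZ i))"
  and b_el_eq: "b_el H p d = (\<lambda>i. el1 H p d (GY i) \<otimes>\<^bsub>G1 H p d\<^esub> el1 H p d (GZ i))"
  by (simp_all add: fun_eq_iff a_el_def b_el_def)

lemma a_el_in_carrier: "i \<in> {1..p} \<Longrightarrow> a_el H p d i \<in> carrier (G1 H p d)"
  and b_el_in_carrier: "i \<in> {1..p} \<Longrightarrow> b_el H p d i \<in> carrier (G1 H p d)"
  by (simp_all add: a_el_eq b_el_eq el1_in_carrier group.is_monoid[OF group_G1] monoid.m_closed)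

lemma to_G2_hom: "to_G2 H p d \<in> hom (G1 H p d) (G2 H p d)"
proof -
  have "to_G2 H p d = (\<lambda>A. peq (gens2 H p) (rels2 H p d) `` A)"
    by (simp add: fun_eq_iff to_G2_def)
  with peq_image_hom[OF gens1_subset_gens2 rels1_subset_rels2] show ?thesis
    by (simp add: G1_def G2_def)
qed

lemma to_G2_el1:
  "x \<in> gens1 H p \<Longrightarrow> to_G2 H p d (el1 H p d x) = gen_el (gens2 H p) (rels2 H p d) x"
  unfolding to_G2_def el1_eq_word_class gen_el_def
  by (rule peq_image_word_class[OF gens1_subset_gens2 rels1_subset_rels2]) simp

lemma s2_conj_a_el:
  assumes "i \<in> {1..p}"
  shows "inv\<^bsub>G2 H p d\<^esub> s2_el H p d \<otimes>\<^bsub>G2 H p d\<^esub> to_G2 H p d (a_el H p d i) \<otimes>\<^bsub>G2 H p d\<^esub> s2_el H p d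
     = to_G2 H p d (b_el H p d i)"
proof -
  interpret G2: group "G2 H p d" by (rule group_G2)
  let ?e = "gen_el (gens2 H p) (rels2 H p d)"
  have e_carrier: "?e x \<in> carrier (G2 H p d)" if "x \<in> gens2 H p" for x
    using that by (simp add: G2_def gen_el_in_carrier)
  have gens: "GS2 \<in> gens2 H p" "GX i \<in> gens2 H p" "GY i \<in> gens2 H p" "GZ i \<in> gens2 H p"
    using assms gens1_subset_gens2 by (auto simp: gens2_def)
  have a: "to_G2 H p d (a_el H p d i) = ?e (GX i) \<otimes>\<^bsub>G2 H p d\<^esub> ?e (GZ i)"
   and b: "to_G2 H p d (b_el H p d i) = ?e (GY i) \<otimes>\<^bsub>G2 H p d\<^esub> ?e (GZ i)"
    using assms by (simp_all add: a_el_def b_el_def hom_mult[OF to_G2_hom] el1_in_carrier to_G2_el1)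
  let ?r = "[(GS2, False), (GX i, True), (GZ i, True), (GS2, True), (GZ i, False), (GY i, False)]"
  have "?r \<in> rels2 H p d" "?r \<in> words (gens2 H p)"
    using assms gens by (auto simp: rels2_def)
  from eval_relator_pres[OF this]
  have "(inv\<^bsub>G2 H p d\<^esub> ?e GS2 \<otimes>\<^bsub>G2 H p d\<^esub> (?e (GX i) \<otimes>\<^bsub>G2 H p d\<^esub> ?e (GZ i)) \<otimes>\<^bsub>G2 H p d\<^esub> ?e GS2)
      \<otimes>\<^bsub>G2 H p d\<^esub> inv\<^bsub>G2 H p d\<^esub> (?e (GY i) \<otimes>\<^bsub>G2 H p d\<^esub> ?e (GZ i)) = \<one>\<^bsub>G2 H p d\<^esub>"
    using gens e_carrier by (simp add: G2_def[symmetric] G2.m_assoc G2.inv_mult_group)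
  then show ?thesis
    unfolding a b s2_el_def using gens e_carrier by (simp add: G2.inv_solve_right')
qed

lemma s2_conj_xz_word:
  assumes "fst ` set wi \<subseteq> {1..p}"
  shows "inv\<^bsub>G2 H p d\<^esub> s2_el H p d \<otimes>\<^bsub>G2 H p d\<^esub> to_G2 H p d (eval_word (G1 H p d) (map (apfst (a_el H p d)) wi))
      \<otimes>\<^bsub>G2 H p d\<^esub> s2_el H p d = to_G2 H p d (eval_word (G1 H p d) (map (apfst (b_el H p d)) wi))"
proof -
  have s2: "s2_el H p d \<in> carrier (G2 H p d)"
    by (simp add: s2_el_def G2_def gen_el_in_carrier gens2_def)
  have a: "fst ` set (map (apfst (a_el H p d)) wi) \<subseteq> carrier (G1 H p d)"
   and b: "fst ` set (map (apfst (b_el H p d)) wi) \<subseteq> carrier (G1 H p d)"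
    using assms by (auto simp: a_el_in_carrier b_el_in_carrier)
  have i: "i \<in> {1..p}" if "i \<in> fst ` set wi" for i
    using assms that by blast
  have "inv\<^bsub>G2 H p d\<^esub> s2_el H p d \<otimes>\<^bsub>G2 H p d\<^esub> eval_word (G2 H p d) (map (apfst (\<lambda>i. to_G2 H p d (a_el H p d i))) wi)
      \<otimes>\<^bsub>G2 H p d\<^esub> s2_el H p d = eval_word (G2 H p d) (map (apfst (\<lambda>i. to_G2 H p d (b_el H p d i))) wi)"
    by (rule group.eval_word_map_conj[OF group_G2 s2 hom_in_carrier[OF to_G2_hom a_el_in_carrier[OF i]]
          s2_conj_a_el[OF i]])
  then show ?thesis
    unfolding eval_word_hom[OF group_G1 group_G2 to_G2_hom a] eval_word_hom[OF group_G1 group_G2 to_G2_hom b]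
      map_apfst_map_apfst .
qed

text \<open>The substitution \<open>z_part\<close> induces the retraction of \<open>G\<^sub>1\<close> onto the free group on the \<open>z\<^sub>i\<close>
  that kills \<open>H\<close>, the \<open>x\<^sub>i\<close>, the \<open>y\<^sub>i\<close> and \<open>s\<^sub>1\<close>; it sends both \<open>a\<^sub>i\<close> and \<open>b\<^sub>i\<close> to \<open>z\<^sub>i\<close>.\<close>

fun z_part :: "'h gen \<Rightarrow> (nat \<times> bool) list" where
  "z_part (GZ i) = [(i, True)]"
| "z_part _ = []"

lemma reduce_subst_z_part_rels1: "\<forall>r\<in>rels1 H p d. reduce_word (subst_word z_part r) = []"
proof
  fix r assume "r \<in> rels1 H p d"
  then consider a b where "r = [(GH a, True), (GH b, True), (GH (a \<otimes>\<^bsub>H\<^esub> b), False)]"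
    | i j where "r = comm_rel (GX i) (GY j)"
    | i j where "r = comm_rel (GX i) (GZ j)"
    | i j where "r = comm_rel (GY i) (GZ j)"
    | i where "r = [(GH (d i), True), (GY i, True), (GX i, False)]"
    | v where "r = comm_rel GS1 v"
    unfolding rels1_def by blast
  then show "reduce_word (subst_word z_part r) = []"
  proof cases
    case (6 v)
    then show ?thesis
      using foldr_push_letter_cancel[of "[]" "inv_word (z_part v)"]
      by (simp add: comm_rel_def reduce_word_def)
  qed (simp_all add: comm_rel_def reduce_word_def inv_letter_def)
qed

lemma el1_mult_GZ_eq_word_class:
  assumes "x \<in> gens1 H p" "i \<in> {1..p}"
  shows "el1 H p d x \<otimes>\<^bsub>G1 H p d\<^esub> el1 H p d (GZ i) = word_class (gens1 H p) (rels1 H p d) [(x, True), (GZ i, True)]"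
  using assms pres_mult_word_class[of "[(x, True)]" "gens1 H p" "[(GZ i, True)]" "rels1 H p d"]
  by (simp add: el1_eq_word_class G1_def)

lemma S1_short_z_part:
  assumes "T \<subseteq> carrier H"
  shows "\<forall>c\<in>S1 H p d T. \<exists>v\<in>words (gens1 H p).
    c = word_class (gens1 H p) (rels1 H p d) v \<and> length (subst_word z_part v) \<le> 1"
proof -
  have gen: "\<exists>v\<in>words (gens1 H p). el1 H p d x = word_class (gens1 H p) (rels1 H p d) v
      \<and> length (subst_word z_part v) \<le> 1" if "x \<in> gens1 H p" for x
    using that by (intro bexI[of _ "[(x, True)]"]) (cases x; simp add: el1_eq_word_class)+
  have pair: "\<exists>v\<in>words (gens1 H p). el1 H p d x \<otimes>\<^bsub>G1 H p d\<^esub> el1 H p d (GZ i)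
      = word_class (gens1 H p) (rels1 H p d) v \<and> length (subst_word z_part v) \<le> 1"
    if "x \<in> {GX i, GY i}" "i \<in> {1..p}" for x i
    using that by (intro bexI[of _ "[(x, True), (GZ i, True)]"]) (auto simp: el1_mult_GZ_eq_word_class)
  show ?thesis
    unfolding S1_def a_el_def b_el_def
    by (intro ballI, elim UnE imageE insertE emptyE; hypsubst, (rule gen | rule pair); use assms in auto)
qed

lemma eval_pair_word:
  assumes "\<forall>i\<in>{1..p}. Q i \<in> gens1 H p" "fst ` set wi \<subseteq> {1..p}"
  shows "eval_word (G1 H p d) (map (apfst (\<lambda>i. el1 H p d (Q i) \<otimes>\<^bsub>G1 H p d\<^esub> el1 H p d (GZ i))) wi)
      = word_class (gens1 H p) (rels1 H p d) (subst_word (\<lambda>i. [(Q i, True), (GZ i, True)]) wi)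
    \<and> subst_word (\<lambda>i. [(Q i, True), (GZ i, True)]) wi \<in> words (gens1 H p)"
  unfolding G1_def using assms
  by (intro eval_word_pres_subst_word) (auto simp: el1_mult_GZ_eq_word_class[unfolded G1_def])

lemma subst_z_part_pair_word:
  assumes "\<forall>i. z_part (Q i) = []"
  shows "subst_word z_part (subst_word (\<lambda>i. [(Q i, True), (GZ i, True)]) wi) = wi"
  using assms by (simp add: subst_word_subst_word subst_word_letters)

lemma word_length_pair_word:
  fixes H :: "('h, 'b) monoid_scheme" and d :: "nat \<Rightarrow> 'h"
  assumes Q: "\<forall>i\<in>{1..p}. Q i \<in> gens1 H p" "\<forall>i. z_part (Q i) = []"
    and wi: "fst ` set wi \<subseteq> {1..p}" "reduced wi"
  defines "F \<equiv> \<lambda>i. el1 H p d (Q i) \<otimes>\<^bsub>G1 H p d\<^esub> el1 H p d (GZ i)"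
  shows "word_length (G1 H p d) (F ` {1..p}) (eval_word (G1 H p d) (map (apfst F) wi)) = length wi"
proof (rule antisym)
  show "word_length (G1 H p d) (F ` {1..p}) (eval_word (G1 H p d) (map (apfst F) wi)) \<le> length wi"
    using wi(1) by (intro order.trans[OF group.word_length_eval_word_le[OF group_G1]]) auto
  have short: "\<forall>c\<in>F ` {1..p}. \<exists>v\<in>words (gens1 H p).
      c = word_class (gens1 H p) (rels1 H p d) v \<and> length (subst_word z_part v) \<le> 1"
  proof
    fix c assume "c \<in> F ` {1..p}"
    then obtain i where "i \<in> {1..p}" "c = F i" by blast
    with Q show "\<exists>v\<in>words (gens1 H p). c = word_class (gens1 H p) (rels1 H p d) v \<and> length (subst_word z_part v) \<le> 1"
      by (intro bexI[of _ "[(Q i, True), (GZ i, True)]"]) (simp_all add: F_def el1_mult_GZ_eq_word_class)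
  qed
  let ?w = "subst_word (\<lambda>i. [(Q i, True), (GZ i, True)]) wi"
  have w: "eval_word (G1 H p d) (map (apfst F) wi) = word_class (gens1 H p) (rels1 H p d) ?w"
    "?w \<in> words (gens1 H p)"
    using eval_pair_word[OF Q(1) wi(1)] by (simp_all add: F_def)
  have "eval_word (G1 H p d) (map (apfst F) wi) \<in> generate (G1 H p d) (F ` {1..p})"
    using wi(1) by (intro group.eval_word_in_generate[OF group_G1]) auto
  from word_length_pres_ge[OF reduce_subst_z_part_rels1 short w(2) this[unfolded w(1), unfolded G1_def]]
  show "length wi \<le> word_length (G1 H p d) (F ` {1..p}) (eval_word (G1 H p d) (map (apfst F) wi))"
    unfolding w(1) unfolding G1_def subst_z_part_pair_word[OF Q(2)] reduce_word_reduced[OF wi(2)] .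
qed

lemma word_length_xz_word:
  "fst ` set wi \<subseteq> {1..p} \<Longrightarrow> reduced wi \<Longrightarrow>
   word_length (G1 H p d) (a_el H p d ` {1..p}) (eval_word (G1 H p d) (map (apfst (a_el H p d)) wi)) = length wi"
  unfolding a_el_eq by (rule word_length_pair_word) auto

lemma word_length_yz_word:
  "fst ` set wi \<subseteq> {1..p} \<Longrightarrow> reduced wi \<Longrightarrow>
   word_length (G1 H p d) (b_el H p d ` {1..p}) (eval_word (G1 H p d) (map (apfst (b_el H p d)) wi)) = length wi"
  unfolding b_el_eq by (rule word_length_pair_word) auto

lemma GH_eval_palindrome:
  assumes "group H" "d ` {1..p} \<subseteq> carrier H" "fst ` set wi \<subseteq> {1..p}" "rev wi = wi"
  shows "el1 H p d (GH (eval_word H (map (apfst d) wi)))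
    = eval_word (G1 H p d) (map (apfst (\<lambda>i. el1 H p d (GX i))) wi)
      \<otimes>\<^bsub>G1 H p d\<^esub> inv\<^bsub>G1 H p d\<^esub> eval_word (G1 H p d) (map (apfst (\<lambda>i. el1 H p d (GY i))) wi)"
proof -
  interpret G: group "G1 H p d" by (rule group_G1)
  let ?x = "\<lambda>i. el1 H p d (GX i)" and ?y = "\<lambda>i. el1 H p d (GY i)"
  have xy: "\<forall>i\<in>fst ` set wi. ?x i \<in> carrier (G1 H p d) \<and> inv\<^bsub>G1 H p d\<^esub> ?y i \<in> carrier (G1 H p d)"
    "\<forall>i\<in>fst ` set wi. ?y i \<in> carrier (G1 H p d)"
    using assms(3) by (auto simp: el1_in_carrier)
  have inv_y_commutes: "inv\<^bsub>G1 H p d\<^esub> ?y i \<otimes>\<^bsub>G1 H p d\<^esub> ?x j = ?x j \<otimes>\<^bsub>G1 H p d\<^esub> inv\<^bsub>G1 H p d\<^esub> ?y i"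
    if "i \<in> fst ` set wi" "j \<in> fst ` set wi" for i j
  proof -
    from that assms(3) have "i \<in> {1..p}" "j \<in> {1..p}" by auto
    then have "?x j \<otimes>\<^bsub>G1 H p d\<^esub> inv\<^bsub>G1 H p d\<^esub> ?y i = inv\<^bsub>G1 H p d\<^esub> ?y i \<otimes>\<^bsub>G1 H p d\<^esub> ?x j"
      by (intro G.commute_inv el1_XYZ_commute(1)) (auto simp: el1_in_carrier)
    then show ?thesis by simp
  qed
  have d: "fst ` set (map (apfst d) wi) \<subseteq> carrier H"
    using assms(2,3) by auto
  have "el1 H p d (GH (eval_word H (map (apfst d) wi)))
      = eval_word (G1 H p d) (map (apfst (\<lambda>i. el1 H p d (GH (d i)))) wi)"
    using eval_word_hom[OF assms(1) group_G1 GH_hom[OF assms(1), of p d] d]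
    by (simp only: map_apfst_map_apfst)
  also have "\<dots> = eval_word (G1 H p d) (map (apfst (\<lambda>i. ?x i \<otimes>\<^bsub>G1 H p d\<^esub> inv\<^bsub>G1 H p d\<^esub> ?y i)) wi)"
    using assms(2,3) by (intro arg_cong[where f = "eval_word _"] map_apfst_cong el1_GH_d) auto
  also have "\<dots> = eval_word (G1 H p d) (map (apfst ?x) wi)
      \<otimes>\<^bsub>G1 H p d\<^esub> eval_word (G1 H p d) (map (apfst (\<lambda>i. inv\<^bsub>G1 H p d\<^esub> ?y i)) wi)"
    using xy(1) inv_y_commutes by (rule G.eval_word_map_mult)
  also have "eval_word (G1 H p d) (map (apfst (\<lambda>i. inv\<^bsub>G1 H p d\<^esub> ?y i)) wi)
      = inv\<^bsub>G1 H p d\<^esub> eval_word (G1 H p d) (map (apfst ?y) wi)"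
    \<comment> \<open>inverting a word reverses it, and \<open>wi\<close> is a palindrome\<close>
    using G.eval_word_map_inv[OF xy(2)] assms(4) by simp
  finally show ?thesis .
qed

lemma el1_words_mult_commute:
  assumes wi: "fst ` set wi \<subseteq> {1..p}"
    and PQ: "\<forall>i\<in>{1..p}. P i \<in> gens1 H p" "\<forall>i\<in>{1..p}. Q i \<in> gens1 H p"
    and commute: "\<And>i j. i \<in> {1..p} \<Longrightarrow> j \<in> {1..p} \<Longrightarrow>
      el1 H p d (P i) \<otimes>\<^bsub>G1 H p d\<^esub> el1 H p d (Q j) = el1 H p d (Q j) \<otimes>\<^bsub>G1 H p d\<^esub> el1 H p d (P i)"
  defines "W \<equiv> \<lambda>R. eval_word (G1 H p d) (map (apfst (\<lambda>i. el1 H p d (R i))) wi)"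
  shows "eval_word (G1 H p d) (map (apfst (\<lambda>i. el1 H p d (P i) \<otimes>\<^bsub>G1 H p d\<^esub> el1 H p d (Q i))) wi)
      = W P \<otimes>\<^bsub>G1 H p d\<^esub> W Q"
    and "W P \<otimes>\<^bsub>G1 H p d\<^esub> W Q = W Q \<otimes>\<^bsub>G1 H p d\<^esub> W P"
proof -
  interpret G: group "G1 H p d" by (rule group_G1)
  have carrier: "\<forall>i\<in>fst ` set wi. el1 H p d (P i) \<in> carrier (G1 H p d) \<and> el1 H p d (Q i) \<in> carrier (G1 H p d)"
    using wi PQ by (auto intro: el1_in_carrier)
  have "i \<in> {1..p}" if "i \<in> fst ` set wi" for i
    using wi that by blast
  note commute = commute[OF this this] commute[OF this this, symmetric]
  show "eval_word (G1 H p d) (map (apfst (\<lambda>i. el1 H p d (P i) \<otimes>\<^bsub>G1 H p d\<^esub> el1 H p d (Q i))) wi)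
      = W P \<otimes>\<^bsub>G1 H p d\<^esub> W Q"
    unfolding W_def by (rule G.eval_word_map_mult[OF carrier commute(2)])
  show "W P \<otimes>\<^bsub>G1 H p d\<^esub> W Q = W Q \<otimes>\<^bsub>G1 H p d\<^esub> W P"
    unfolding W_def by (rule G.eval_word_map_commute[OF carrier commute(1)])
qed

lemma yz_word_eq_xz_word_mult_GH:
  assumes "group H" "d ` {1..p} \<subseteq> carrier H" "fst ` set wi \<subseteq> {1..p}" "rev wi = wi"
  shows "eval_word (G1 H p d) (map (apfst (b_el H p d)) wi)
    = eval_word (G1 H p d) (map (apfst (a_el H p d)) wi)
      \<otimes>\<^bsub>G1 H p d\<^esub> el1 H p d (GH (inv\<^bsub>H\<^esub> eval_word H (map (apfst d) wi)))"
proof -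
  interpret G: group "G1 H p d" by (rule group_G1)
  interpret hom: group_hom H "G1 H p d" "\<lambda>a. el1 H p d (GH a)"
    using assms(1) GH_hom by (simp add: group_hom_def group_hom_axioms_def group_G1)
  let ?W = "\<lambda>R. eval_word (G1 H p d) (map (apfst (\<lambda>i. el1 H p d (R i))) wi)"
  have gens: "\<forall>i\<in>{1..p}. GX i \<in> gens1 H p" "\<forall>i\<in>{1..p}. GY i \<in> gens1 H p"
    "\<forall>i\<in>{1..p}. GZ i \<in> gens1 H p"
    by simp_all
  have W: "?W R \<in> carrier (G1 H p d)" if "\<forall>i\<in>{1..p}. R i \<in> gens1 H p" for R
    using assms(3) that by (intro G.eval_word_map_closed) (auto intro: el1_in_carrier)
  note XY = el1_words_mult_commute[where H = H and d = d, OF assms(3) gens(1,2) el1_XYZ_commute(1)]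
    and XZ = el1_words_mult_commute[where H = H and d = d, OF assms(3) gens(1,3) el1_XYZ_commute(2)]
    and YZ = el1_words_mult_commute[where H = H and d = d, OF assms(3) gens(2,3) el1_XYZ_commute(3)]
  have "\<forall>i\<in>fst ` set wi. d i \<in> carrier H"
    using assms(2,3) by blast
  then have "eval_word H (map (apfst d) wi) \<in> carrier H"
    by (rule group.eval_word_map_closed[OF assms(1)])
  then have "el1 H p d (GH (inv\<^bsub>H\<^esub> eval_word H (map (apfst d) wi)))
      = inv\<^bsub>G1 H p d\<^esub> (?W GX \<otimes>\<^bsub>G1 H p d\<^esub> inv\<^bsub>G1 H p d\<^esub> ?W GY)"
    using GH_eval_palindrome[OF assms] by simp
  with XZ(1) YZ(1) show ?thesis
    unfolding a_el_eq b_el_eq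
    using G.commuting_mult_inv_mult_inv[OF W[OF gens(1)] W[OF gens(2)] W[OF gens(3)] XY(2) XZ(2) YZ(2)]
    by simp
qed

lemma word_length_S1_xz_word_mult_GH:
  assumes "group H" "T \<subseteq> carrier H" "fst ` set wi \<subseteq> {1..p}" "reduced wi" "t \<in> generate H T"
  shows "length wi \<le> word_length (G1 H p d) (S1 H p d T)
    (eval_word (G1 H p d) (map (apfst (a_el H p d)) wi) \<otimes>\<^bsub>G1 H p d\<^esub> el1 H p d (GH t))"
proof -
  interpret G: group "G1 H p d" by (rule group_G1)
  interpret hom: group_hom H "G1 H p d" "\<lambda>a. el1 H p d (GH a)"
    using assms(1) GH_hom by (simp add: group_hom_def group_hom_axioms_def group_G1)
  let ?g = "eval_word (G1 H p d) (map (apfst (a_el H p d)) wi)"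
  let ?w = "subst_word (\<lambda>i. [(GX i, True), (GZ i, True)]) wi @ [(GH t, True)]"
  have t: "t \<in> carrier H"
    using assms(2,5) group.generate_in_carrier[OF assms(1)] by blast
  have "?g \<otimes>\<^bsub>G1 H p d\<^esub> el1 H p d (GH t) = word_class (gens1 H p) (rels1 H p d) ?w"
   and w: "?w \<in> words (gens1 H p)"
    using eval_pair_word[of p GX H wi d] assms(3) t
    by (simp_all add: a_el_eq el1_eq_word_class G1_def pres_mult_word_class)
  moreover have "?g \<otimes>\<^bsub>G1 H p d\<^esub> el1 H p d (GH t) \<in> generate (G1 H p d) (S1 H p d T)"
  proof (rule generate.eng)
    have "?g \<in> generate (G1 H p d) (a_el H p d ` {1..p})"
      using assms(3) by (intro G.eval_word_in_generate) auto
    then show "?g \<in> generate (G1 H p d) (S1 H p d T)"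
      by (rule subsetD[OF G.mono_generate, rotated]) (auto simp: S1_def)
    have "el1 H p d (GH t) \<in> generate (G1 H p d) ((\<lambda>a. el1 H p d (GH a)) ` T)"
      using assms(2,5) by (simp add: hom.generate_img)
    then show "el1 H p d (GH t) \<in> generate (G1 H p d) (S1 H p d T)"
      by (rule subsetD[OF G.mono_generate, rotated]) (auto simp: S1_def)
  qed
  ultimately have "length (reduce_word (subst_word z_part ?w))
      \<le> word_length (G1 H p d) (S1 H p d T) (?g \<otimes>\<^bsub>G1 H p d\<^esub> el1 H p d (GH t))"
    using word_length_pres_ge[OF reduce_subst_z_part_rels1 S1_short_z_part[OF assms(2)] w]
    by (simp add: G1_def)
  moreover have "subst_word z_part ?w = wi"
    by (simp add: subst_z_part_pair_word)
  ultimately show ?thesis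
    using reduce_word_reduced[OF assms(4)] by simp
qed

lemma cayley_path_xz_word_yz_word:
  assumes H: "group H" "T \<subseteq> carrier H" "generate H T = carrier H" "d ` {1..p} \<subseteq> carrier H"
    and wi: "fst ` set wi \<subseteq> {1..p}" "reduced wi" "rev wi = wi"
  obtains \<gamma> where "cayley_path (G1 H p d) (S1 H p d T) \<gamma>
      (eval_word (G1 H p d) (map (apfst (a_el H p d)) wi)) (eval_word (G1 H p d) (map (apfst (b_el H p d)) wi))"
    "length \<gamma> \<le> Suc (word_length H T (eval_word H (map (apfst d) wi)))"
    "\<forall>v\<in>set \<gamma>. \<exists>t\<in>carrier H. v = eval_word (G1 H p d) (map (apfst (a_el H p d)) wi) \<otimes>\<^bsub>G1 H p d\<^esub> el1 H p d (GH t)"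
    "\<forall>v\<in>set \<gamma>. length wi \<le> word_length (G1 H p d) (S1 H p d T) v"
proof -
  let ?g0 = "eval_word (G1 H p d) (map (apfst (a_el H p d)) wi)"
  let ?u = "eval_word H (map (apfst d) wi)"
  have "?u \<in> carrier H"
    using wi(1) H(4) by (auto intro!: group.eval_word_map_closed[OF H(1)])
  then have u: "?u \<in> generate H T" "inv\<^bsub>H\<^esub> ?u \<in> generate H T"
    using H(3) group.inv_closed[OF H(1)] by simp_all
  have "?g0 \<in> carrier (G1 H p d)"
    using wi(1) by (auto intro!: group.eval_word_map_closed[OF group_G1] a_el_in_carrier)
  moreover have "(\<lambda>a. el1 H p d (GH a)) ` T \<subseteq> S1 H p d T"
    by (auto simp: S1_def)
  ultimately obtain \<gamma> where \<gamma>: "cayley_path (G1 H p d) (S1 H p d T) \<gamma> ?g0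
      (?g0 \<otimes>\<^bsub>G1 H p d\<^esub> el1 H p d (GH (inv\<^bsub>H\<^esub> ?u)))"
    "length \<gamma> = Suc (word_length H T (inv\<^bsub>H\<^esub> ?u))"
    "\<forall>v\<in>set \<gamma>. \<exists>t\<in>carrier H. v = ?g0 \<otimes>\<^bsub>G1 H p d\<^esub> el1 H p d (GH t)"
    using cayley_path_hom_word[OF H(1) group_G1 GH_hom[OF H(1)] H(2) _ _ u(2)] by blast
  moreover have "length \<gamma> \<le> Suc (word_length H T ?u)"
    using \<gamma>(2) group.word_length_inv_le[OF H(1,2) u(1)] by simp
  moreover have "\<forall>v\<in>set \<gamma>. length wi \<le> word_length (G1 H p d) (S1 H p d T) v"
  proof
    fix v assume "v \<in> set \<gamma>"
    from bspec[OF \<gamma>(3) this] obtain t where "t \<in> carrier H" "v = ?g0 \<otimes>\<^bsub>G1 H p d\<^esub> el1 H p d (GH t)"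
      by (elim bexE)
    with word_length_S1_xz_word_mult_GH[OF H(1,2) wi(1,2), of t] H(3)
    show "length wi \<le> word_length (G1 H p d) (S1 H p d T) v"
      by simp
  qed
  ultimately show ?thesis
    using that yz_word_eq_xz_word_mult_GH[OF H(1,4) wi(1,3)] by simp
qed

theorem lemma3p8:
  fixes H :: "('h, 'b) monoid_scheme" and T :: "'h set" and p :: nat and d :: "nat \<Rightarrow> 'h"
    and \<Delta> f :: "real \<Rightarrow> real" and D r0 :: real and r :: nat
  assumes H_fp: "finitely_presented H"
    and T_fin: "finite T" and T_sub: "T \<subseteq> carrier H" and T_gen: "generate H T = carrier H"
    and R_sub: "d ` {1..p} \<subseteq> T" and d_inj: "inj_on d {1..p}"
    and R_free: "free_basis H (d ` {1..p})"
    and \<Delta>_mono: "mono_on {0..} \<Delta>" and \<Delta>_bij: "bij_betw \<Delta> {0..} {0..}"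
    and \<Delta>_equiv: "lip_equiv \<Delta> (dist_fn H (d ` {1..p}) T)"
    and \<Delta>_ge: "\<forall>x\<ge>1. \<Delta> x \<ge> x"
    and f_inv: "\<forall>x\<ge>0. f x \<ge> 0 \<and> \<Delta> (f x) = x \<and> f (\<Delta> x) = x"
    and f_le: "\<forall>g\<in>generate H (d ` {1..p}).
                 f (real (word_length H (d ` {1..p}) g)) \<le> real (word_length H T g)"
    and D_gt: "D > 1" and r0_ge: "r0 \<ge> 1"
    and cert: "\<forall>x\<ge>r0. \<exists>u\<in>generate H (d ` {1..p}). palindromic H (d ` {1..p}) u \<and>
                 x / D \<le> real (word_length H (d ` {1..p}) u) \<and>
                 real (word_length H (d ` {1..p}) u) \<le> x \<and>
                 real (word_length H T u) \<le> D * f x"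
    and r_ge: "real r \<ge> r0"
  shows "\<exists>g0 g1.
     g0 \<in> generate (G1 H p d) (a_el H p d ` {1..p}) \<and>
     g1 \<in> generate (G1 H p d) (b_el H p d ` {1..p}) \<and>
     inv\<^bsub>G2 H p d\<^esub> (s2_el H p d) \<otimes>\<^bsub>G2 H p d\<^esub> to_G2 H p d g0 \<otimes>\<^bsub>G2 H p d\<^esub> s2_el H p d
       = to_G2 H p d g1 \<and>
     real r / D \<le> real (word_length (G1 H p d) (a_el H p d ` {1..p}) g0) \<and>
     real (word_length (G1 H p d) (a_el H p d ` {1..p}) g0) \<le> real r \<and>
     real r / D \<le> real (word_length (G1 H p d) (b_el H p d ` {1..p}) g1) \<and>
     real (word_length (G1 H p d) (b_el H p d ` {1..p}) g1) \<le> real r \<and>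
     (\<exists>\<gamma>. cayley_path (G1 H p d) (S1 H p d T) \<gamma> g0 g1 \<and>
        real (length \<gamma> - 1) \<le> D * f (real r) \<and>
        (\<forall>v\<in>set \<gamma>. \<exists>h\<in>carrier H. v = g0 \<otimes>\<^bsub>G1 H p d\<^esub> el1 H p d (GH h)) \<and>
        (\<forall>v\<in>set \<gamma>. real (word_length (G1 H p d) (S1 H p d T) v) \<ge> real r / D))"
proof -
  \<comment> \<open>of the assumptions on \<open>\<Delta>\<close>, \<open>f\<close>, \<open>D\<close> and \<open>r0\<close> only the certificates \<open>cert\<close> are needed\<close>
  have H: "group H"
    using H_fp by (simp add: finitely_presented_def)
  have R_carrier: "d ` {1..p} \<subseteq> carrier H"
    using R_sub T_sub by blast
  obtain u where u: "palindromic H (d ` {1..p}) u"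
      "real r / D \<le> real (word_length H (d ` {1..p}) u)" "real (word_length H (d ` {1..p}) u) \<le> real r"
      "real (word_length H T u) \<le> D * f (real r)"
    using cert r_ge by blast
  obtain wi where wi: "fst ` set wi \<subseteq> {1..p}" "reduced wi" "rev wi = wi"
      "eval_word H (map (apfst d) wi) = u" "length wi = word_length H (d ` {1..p}) u"
    using palindromic_index_word[OF H R_free u(1)] .
  define g0 where "g0 = eval_word (G1 H p d) (map (apfst (a_el H p d)) wi)"
  define g1 where "g1 = eval_word (G1 H p d) (map (apfst (b_el H p d)) wi)"
  obtain \<gamma> where \<gamma>: "cayley_path (G1 H p d) (S1 H p d T) \<gamma> g0 g1" "length \<gamma> \<le> Suc (word_length H T u)"
      "\<forall>v\<in>set \<gamma>. \<exists>h\<in>carrier H. v = g0 \<otimes>\<^bsub>G1 H p d\<^esub> el1 H p d (GH h)"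
      "\<forall>v\<in>set \<gamma>. length wi \<le> word_length (G1 H p d) (S1 H p d T) v"
    using cayley_path_xz_word_yz_word[OF H T_sub T_gen R_carrier wi(1-3)] unfolding g0_def g1_def wi(4) .
  have "real (length \<gamma> - 1) \<le> D * f (real r)"
    using \<gamma>(2) u(4) by linarith
  moreover have "\<forall>v\<in>set \<gamma>. real r / D \<le> real (word_length (G1 H p d) (S1 H p d T) v)"
    using \<gamma>(4) u(2) wi(5) by (simp add: order.trans)
  moreover have "g0 \<in> generate (G1 H p d) (a_el H p d ` {1..p})" "g1 \<in> generate (G1 H p d) (b_el H p d ` {1..p})"
    unfolding g0_def g1_def using wi(1) by (simp_all add: group.eval_word_map_in_generate[OF group_G1])
  moreover have "word_length (G1 H p d) (a_el H p d ` {1..p}) g0 = word_length H (d ` {1..p}) u"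
    "word_length (G1 H p d) (b_el H p d ` {1..p}) g1 = word_length H (d ` {1..p}) u"
    using word_length_xz_word[OF wi(1,2)] word_length_yz_word[OF wi(1,2)] wi(5) by (simp_all add: g0_def g1_def)
  moreover have "inv\<^bsub>G2 H p d\<^esub> s2_el H p d \<otimes>\<^bsub>G2 H p d\<^esub> to_G2 H p d g0 \<otimes>\<^bsub>G2 H p d\<^esub> s2_el H p d
      = to_G2 H p d g1"
    unfolding g0_def g1_def by (rule s2_conj_xz_word[OF wi(1)])
  ultimately show ?thesis
    using u(2,3) \<gamma>(1,3) by - (rule exI[of _ g0], rule exI[of _ g1], intro conjI exI[of _ \<gamma>]; simp)
qed

end
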